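(* Let $U$ be an effectively optimal machine, and let $A=\{x: U(x)=0\}$ and $B=\{x:U(x)=1\}$ (where $0,1$ denote the one-bit strings). Then $A$ and $B$ are disjoint and computably inseparable. Moreover, for every partial computable function $h$ from binary strings to $\{0,1\}$, letting $$E_n=\frac{\#\{x: |x|\le n,\ h(x)\text{ undefined, or } (x\in A\wedge h(x)=1), \text{ or } (x\in B\wedge h(x)=0)\}}{2^{n+1}},$$ we have $\liminf_n E_n>0$.
   Context: A machine is a partial computable function from binary strings to binary strings. A total function $h$ on strings is length-bounded if $|h(x)|\le|x|+c$ for some $c$ and all $x$. $U$ is effectively optimal if for every machine $V$ there is a total computable length-bounded $h$ with $V(x)=U(h(x))$ for all $x$ (both sides undefined, or both defined and equal). Disjoint sets $A,B$ are computably inseparable if there is no total computable $0/1$-valued $h$ with $h=0$ on $A$ and $h=1$ on $B$. *)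

theory Defs
  imports Complex_Main "HOL-Library.Extended_Real" "HOL-Library.Liminf_Limsup"
begin

datatype recf =
    Zero
  | Succ
  | Proj nat
  | Comp recf "recf list"
  | Prim recf recf
  | Mn recf

inductive eval :: "recf \<Rightarrow> nat list \<Rightarrow> nat \<Rightarrow> bool" where
  zero: "eval Zero xs 0"
| succ: "eval Succ (x # xs) (Suc x)"
| proj: "i < length xs \<Longrightarrow> eval (Proj i) xs (xs ! i)"
| comp: "list_all2 (\<lambda>g y. eval g xs y) gs ys \<Longrightarrow> eval f ys z \<Longrightarrow> eval (Comp f gs) xs z"
| prim0: "eval f xs z \<Longrightarrow> eval (Prim f g) (0 # xs) z"
| primS: "eval (Prim f g) (n # xs) y \<Longrightarrow> eval g (n # y # xs) z
          \<Longrightarrow> eval (Prim f g) (Suc n # xs) z"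
| mu: "eval f (n # xs) 0 \<Longrightarrow> (\<forall>m<n. \<exists>k. eval f (m # xs) (Suc k))
          \<Longrightarrow> eval (Mn f) xs n"

text \<open>Binary strings are bool lists (False = bit 0, True = bit 1).
  Computable bijection with the naturals (bijective base-2 numeration).\<close>
fun s2n :: "bool list \<Rightarrow> nat" where
  "s2n [] = 0"
| "s2n (b # bs) = 2 * s2n bs + (if b then 2 else 1)"

definition partial_computable :: "(bool list \<Rightarrow> bool list option) \<Rightarrow> bool" where
  "partial_computable V \<longleftrightarrow>
     (\<exists>f. \<forall>x y. V x = Some y \<longleftrightarrow> eval f [s2n x] (s2n y))"

abbreviation machine :: "(bool list \<Rightarrow> bool list option) \<Rightarrow> bool" where
  "machine V \<equiv> partial_computable V"

definition total_computable :: "(bool list \<Rightarrow> bool list) \<Rightarrow> bool" where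
  "total_computable h \<longleftrightarrow> partial_computable (\<lambda>x. Some (h x))"

definition length_bounded :: "(bool list \<Rightarrow> bool list) \<Rightarrow> bool" where
  "length_bounded h \<longleftrightarrow> (\<exists>c. \<forall>x. length (h x) \<le> length x + c)"

definition effectively_optimal :: "(bool list \<Rightarrow> bool list option) \<Rightarrow> bool" where
  "effectively_optimal U \<longleftrightarrow> machine U \<and>
     (\<forall>V. machine V \<longrightarrow>
        (\<exists>h. total_computable h \<and> length_bounded h \<and> (\<forall>x. V x = U (h x))))"

abbreviation bit0 :: "bool list" where "bit0 \<equiv> [False]"
abbreviation bit1 :: "bool list" where "bit1 \<equiv> [True]"

definition computably_inseparable :: "bool list set \<Rightarrow> bool list set \<Rightarrow> bool" where
  "computably_inseparable A B \<longleftrightarrow>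
     \<not> (\<exists>h. total_computable h \<and> (\<forall>x. h x \<in> {bit0, bit1}) \<and>
            (\<forall>x\<in>A. h x = bit0) \<and> (\<forall>x\<in>B. h x = bit1))"

end

theory Submission
  imports Defs "HOL-Library.Nat_Bijection"
begin

text \<open>Let \<open>V\<close> be the machine that on input \<open>1^p 0 y\<close> runs program \<open>p\<close> on the whole input to
  obtain a program \<open>a\<close> and then runs \<open>a\<close> on the whole input. Effective optimality yields a total
  computable, length bounded \<open>t\<close> with \<open>V = U \<circ> t\<close>. Knowing \<open>t\<close>, choose \<open>p\<close> so that on \<open>1^p 0 y\<close>
  it computes \<open>z = t (1^p 0 y)\<close> and the number \<open>r\<close> of earlier \<open>y'\<close> with the same image \<open>z\<close>, and
  returns a program that outputs the flip of \<open>h z\<close> if \<open>r = 0\<close>, the bit 0 if \<open>r = 1\<close> and the bit 1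
  otherwise. As \<open>U z = V (1^p 0 y)\<close> for all these \<open>y\<close>, no \<open>z\<close> has three preimages, and at its
  first preimage \<open>U z\<close> contradicts \<open>h z\<close>. So the \<open>2^L\<close> inputs with \<open>|y| = L\<close> produce at least
  \<open>2^(L-1)\<close> misclassified strings of length at most \<open>L + const\<close>, whereas a total separator
  misclassifies nothing.

  Running programs given by numbers needs a universal partial recursive function; it is a
  \<open>\<mu>\<close>-search for a numerically coded derivation of \<open>eval\<close>.\<close>

section \<open>Partial recursive functions\<close>

inductive_cases evalZeroE: "eval Zero xs y"
inductive_cases evalSuccE: "eval Succ xs y"
inductive_cases evalProjE: "eval (Proj i) xs y"
inductive_cases evalCompE: "eval (Comp f gs) xs y"
inductive_cases evalPrimE: "eval (Prim f g) xs y"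
inductive_cases evalMnE: "eval (Mn f) xs y"

lemma list_all2_unique:
  "list_all2 (\<lambda>g y. P g y \<and> (\<forall>y'. P g y' \<longrightarrow> y = y')) gs ys \<Longrightarrow> list_all2 P gs ys' \<Longrightarrow> ys = ys'"
proof (induction gs arbitrary: ys ys')
  case Nil then show ?case by simp
next
  case (Cons g gs)
  from Cons.prems(1) obtain y yr where 1: "ys = y # yr" "P g y" "\<forall>y'. P g y' \<longrightarrow> y = y'"
    "list_all2 (\<lambda>g y. P g y \<and> (\<forall>y'. P g y' \<longrightarrow> y = y')) gs yr"
    unfolding list_all2_Cons1 by blast
  from Cons.prems(2) obtain y' yr' where 2: "ys' = y' # yr'" "P g y'" "list_all2 P gs yr'"
    unfolding list_all2_Cons1 by blast
  have "yr = yr'" by (rule Cons.IH[OF 1(4) 2(3)])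
  moreover have "y = y'" using 1(3) 2(2) by blast
  ultimately show ?case using 1(1) 2(1) by simp
qed

lemma eval_det: "eval f xs y \<Longrightarrow> eval f xs y' \<Longrightarrow> y = y'"
proof (induction arbitrary: y' rule: eval.induct)
  case (zero xs) then show ?case by (auto elim: evalZeroE)
next
  case (succ x xs) then show ?case by (auto elim: evalSuccE)
next
  case (proj i xs) then show ?case by (auto elim: evalProjE)
next
  case (comp xs gs ys f z)
  from comp.prems obtain ys' where a: "list_all2 (\<lambda>g y. eval g xs y) gs ys'" "eval f ys' y'"
    by (rule evalCompE) blast
  have "list_all2 (\<lambda>g y. eval g xs y \<and> (\<forall>y'. eval g xs y' \<longrightarrow> y = y')) gs ys"
    using comp.IH(1) by (rule list_all2_mono) blast
  from list_all2_unique[OF this a(1)] a(2) comp.IH(2) show ?case by blast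
next
  case (prim0 f xs z g)
  from prim0.prems have "eval f xs y'" by (cases rule: evalPrimE) auto
  then show ?case using prim0.IH by blast
next
  case (primS f g n xs y z)
  from primS.prems obtain y'' where "eval (Prim f g) (n # xs) y''" "eval g (n # y'' # xs) y'"
    by (cases rule: evalPrimE) auto
  then show ?case using primS.IH by blast
next
  case (mu f n xs)
  from mu.prems obtain n' where n': "y' = n'" "eval f (n' # xs) 0" "\<forall>m<n'. \<exists>k. eval f (m # xs) (Suc k)"
    by (rule evalMnE) blast
  show ?case
  proof (cases n n' rule: linorder_cases)
    case less
    then obtain k where "eval f (n # xs) (Suc k)" using n'(3) by blast
    with mu.IH(1) show ?thesis by fastforce
  next
    case greater
    then obtain k where "eval f (n' # xs) (Suc k) \<and> (\<forall>y'. eval f (n' # xs) y' \<longrightarrow> Suc k = y')" using mu.IH(2) by blast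
    with n'(2) show ?thesis by blast
  qed (simp add: n')
qed

lemma eval_Comp1_iff:
  "eval (Comp f [g]) xs z \<longleftrightarrow> (\<exists>a. eval g xs a \<and> eval f [a] z)"
proof
  assume "eval (Comp f [g]) xs z"
  then obtain ys where "list_all2 (\<lambda>g y. eval g xs y) [g] ys" "eval f ys z" by (rule evalCompE) blast
  then show "\<exists>a. eval g xs a \<and> eval f [a] z" by (auto simp: list_all2_Cons1)
qed (auto intro: eval.comp[of _ _ "[a]" for a])

lemma eval_Comp2_iff:
  "eval (Comp f [g1, g2]) xs z \<longleftrightarrow> (\<exists>a b. eval g1 xs a \<and> eval g2 xs b \<and> eval f [a, b] z)"
proof
  assume "eval (Comp f [g1, g2]) xs z"
  then obtain ys where "list_all2 (\<lambda>g y. eval g xs y) [g1, g2] ys" "eval f ys z" by (rule evalCompE) blast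
  then show "\<exists>a b. eval g1 xs a \<and> eval g2 xs b \<and> eval f [a, b] z" by (auto simp: list_all2_Cons1)
qed (auto intro: eval.comp[of _ _ "[a, b]" for a b])

lemma eval_Proj0_iff: "eval (Proj 0) [v] a \<longleftrightarrow> a = v"
  by (auto elim: evalProjE intro: eval.proj[of 0 "[v]", simplified])

definition recursive :: "nat \<Rightarrow> (nat list \<Rightarrow> nat) \<Rightarrow> bool" where
  "recursive n F \<longleftrightarrow> (\<exists>f. \<forall>xs. length xs = n \<longrightarrow> eval f xs (F xs))"

lemma recursive_cong:
  "recursive n F \<Longrightarrow> (\<And>xs. length xs = n \<Longrightarrow> F xs = G xs) \<Longrightarrow> recursive n G"
  unfolding recursive_def by (erule exE) (rule exI, simp)

definition recf_of :: "nat \<Rightarrow> (nat list \<Rightarrow> nat) \<Rightarrow> recf" where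
  "recf_of n F = (SOME f. \<forall>xs. length xs = n \<longrightarrow> eval f xs (F xs))"

lemma eval_recf_of: assumes "recursive n F" "length xs = n" shows "eval (recf_of n F) xs (F xs)"
proof -
  have "\<exists>f. \<forall>xs. length xs = n \<longrightarrow> eval f xs (F xs)" using assms(1) unfolding recursive_def .
  then have "\<forall>xs. length xs = n \<longrightarrow> eval (recf_of n F) xs (F xs)" unfolding recf_of_def by (rule someI_ex)
  then show ?thesis using assms(2) by blast
qed

lemma eval_recf_of_iff:
  "recursive n F \<Longrightarrow> length xs = n \<Longrightarrow> eval (recf_of n F) xs y \<longleftrightarrow> y = F xs"
  using eval_recf_of eval_det by blast

lemma recursive_proj: "i < n \<Longrightarrow> recursive n (\<lambda>xs. xs ! i)"
  unfolding recursive_def by (intro exI[of _ "Proj i"] allI impI eval.proj) simp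

lemma recursive_zero: "recursive n (\<lambda>xs. 0)"
  unfolding recursive_def by (intro exI[of _ "Zero"] allI impI eval.zero)

lemma list_all2_choice:
  "\<forall>F\<in>set Fs. \<exists>f. P F f \<Longrightarrow> \<exists>fs. list_all2 P Fs fs"
proof (induction Fs)
  case (Cons F Fs)
  then obtain f fs where "P F f" "list_all2 P Fs fs" by auto
  then show ?case by (intro exI[of _ "f # fs"]) simp
qed (intro exI[of _ "[]"], simp)

lemma recursive_comp:
  assumes "\<forall>F\<in>set Fs. recursive n F" "recursive (length Fs) G"
  shows "recursive n (\<lambda>xs. G (map (\<lambda>F. F xs) Fs))"
proof -
  have "\<forall>F\<in>set Fs. \<exists>f. \<forall>xs. length xs = n \<longrightarrow> eval f xs (F xs)"
    using assms(1) unfolding recursive_def .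
  from list_all2_choice[OF this] obtain fs where
    fs: "list_all2 (\<lambda>F f. \<forall>xs. length xs = n \<longrightarrow> eval f xs (F xs)) Fs fs" ..
  from assms(2) obtain g where g: "\<forall>ys. length ys = length Fs \<longrightarrow> eval g ys (G ys)"
    unfolding recursive_def ..
  show ?thesis unfolding recursive_def
  proof (intro exI allI impI)
    fix xs :: "nat list" assume xs: "length xs = n"
    have "list_all2 (\<lambda>g y. eval g xs y) fs (map (\<lambda>F. F xs) Fs)"
      using fs xs unfolding list_all2_conv_all_nth by simp
    moreover have "eval g (map (\<lambda>F. F xs) Fs) (G (map (\<lambda>F. F xs) Fs))"
      using g by simp
    ultimately show "eval (Comp g fs) xs (G (map (\<lambda>F. F xs) Fs))"
      by (rule eval.comp)
  qed
qed

fun primrec_val :: "(nat list \<Rightarrow> nat) \<Rightarrow> (nat list \<Rightarrow> nat) \<Rightarrow> nat \<Rightarrow> nat list \<Rightarrow> nat" where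
  "primrec_val B S 0 e = B e"
| "primrec_val B S (Suc i) e = S (i # primrec_val B S i e # e)"

lemma recursive_primrec:
  assumes "recursive n B" "recursive (Suc (Suc n)) S"
  shows "recursive (Suc n) (\<lambda>xs. primrec_val B S (hd xs) (tl xs))"
proof -
  obtain b where b: "\<forall>xs. length xs = n \<longrightarrow> eval b xs (B xs)" using assms(1) unfolding recursive_def ..
  obtain s where s: "\<forall>xs. length xs = Suc (Suc n) \<longrightarrow> eval s xs (S xs)" using assms(2) unfolding recursive_def ..
  have ev: "eval (Prim b s) (i # e) (primrec_val B S i e)" if "length e = n" for i e
  proof (induction i)
    case 0 then show ?case using b that by (simp add: eval.prim0)
  next
    case (Suc i)
    have "eval s (i # primrec_val B S i e # e) (S (i # primrec_val B S i e # e))" using s that by simp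
    with Suc show ?case by (simp add: eval.primS)
  qed
  show ?thesis unfolding recursive_def
  proof (intro exI allI impI)
    fix xs :: "nat list" assume "length xs = Suc n"
    then obtain i e where "xs = i # e" "length e = n" by (cases xs) auto
    then show "eval (Prim b s) xs (primrec_val B S (hd xs) (tl xs))" using ev by simp
  qed
qed

lemma recursive_comp1:
  "recursive 1 (\<lambda>e. g (e!0)) \<Longrightarrow> recursive n F \<Longrightarrow> recursive n (\<lambda>xs. g (F xs))"
  using recursive_comp[of "[F]" n "\<lambda>e. g (e!0)"] by simp
lemma recursive_comp2:
  "recursive 2 (\<lambda>e. g (e!0) (e!1)) \<Longrightarrow> recursive n F1 \<Longrightarrow> recursive n F2 \<Longrightarrow> recursive n (\<lambda>xs. g (F1 xs) (F2 xs))"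
  using recursive_comp[of "[F1,F2]" n "\<lambda>e. g (e!0) (e!1)"] by (simp add: numeral_2_eq_2)
lemma recursive_comp3:
  "recursive 3 (\<lambda>e. g (e!0) (e!1) (e!2)) \<Longrightarrow> recursive n F1 \<Longrightarrow> recursive n F2 \<Longrightarrow> recursive n F3 \<Longrightarrow> recursive n (\<lambda>xs. g (F1 xs) (F2 xs) (F3 xs))"
  using recursive_comp[of "[F1,F2,F3]" n "\<lambda>e. g (e!0) (e!1) (e!2)"] by (simp add: numeral_3_eq_3)

lemma recursive_comp5:
  assumes "recursive 5 (\<lambda>e. g (e!0) (e!1) (e!2) (e!3) (e!4))" "recursive n A1" "recursive n A2" "recursive n A3" "recursive n A4" "recursive n A5"
  shows "recursive n (\<lambda>e. g (A1 e) (A2 e) (A3 e) (A4 e) (A5 e))"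
  using recursive_comp[of "[A1,A2,A3,A4,A5]" n "\<lambda>e. g (e!0) (e!1) (e!2) (e!3) (e!4)"] assms
  by (simp add: eval_nat_numeral)

lemma recursive_Suc: "recursive n F \<Longrightarrow> recursive n (\<lambda>xs. Suc (F xs))"
proof -
  have "recursive 1 (\<lambda>e. Suc (e!0))" unfolding recursive_def
    by (auto intro!: exI[of _ Succ] eval.succ simp: length_Suc_conv)
  then show "recursive n F \<Longrightarrow> recursive n (\<lambda>xs. Suc (F xs))" by (rule recursive_comp1)
qed

lemma recursive_const: "recursive n (\<lambda>xs. k)"
  by (induction k) (auto intro: recursive_zero recursive_Suc)

lemma recursive_by_primrec:
  assumes "recursive n B" "recursive (Suc (Suc n)) S" "recursive n C"
    and "\<And>e. length e = n \<Longrightarrow> primrec_val B S (C e) e = F e"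
  shows "recursive n F"
proof -
  have "recursive n (\<lambda>xs. (\<lambda>ys. primrec_val B S (hd ys) (tl ys)) (map (\<lambda>F. F xs) (C # map (\<lambda>i xs. xs!i) [0..<n])))"
    by (rule recursive_comp) (auto intro: assms recursive_proj recursive_primrec)
  then show ?thesis
  proof (rule recursive_cong)
    fix xs :: "nat list" assume "length xs = n"
    then show "primrec_val B S (hd (map (\<lambda>F. F xs) (C # map (\<lambda>i xs. xs!i) [0..<n])))
        (tl (map (\<lambda>F. F xs) (C # map (\<lambda>i xs. xs!i) [0..<n]))) = F xs"
      using map_nth[of xs] assms(4) by (simp add: comp_def)
  qed
qed

lemma recursive_add_base: "recursive 2 (\<lambda>e. e!0 + e!1)"
proof (rule recursive_by_primrec[where B="\<lambda>e. e!1" and S="\<lambda>e. Suc (e!1)" and C="\<lambda>e. e!0"])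
  fix e :: "nat list"
  have "primrec_val (\<lambda>e. e!1) (\<lambda>e. Suc (e!1)) i e = i + e!1" for i by (induction i) auto
  then show "primrec_val (\<lambda>e. e!1) (\<lambda>e. Suc (e!1)) (e!0) e = e!0 + e!1" .
qed (intro recursive_Suc recursive_proj; simp)+

lemma recursive_dec_base: "recursive 1 (\<lambda>e. e!0 - 1)"
proof (rule recursive_by_primrec[where B="\<lambda>e. 0" and S="\<lambda>e. e!0" and C="\<lambda>e. e!0"])
  fix e :: "nat list"
  have "primrec_val (\<lambda>e. 0) (\<lambda>e. e!0) i e = i - 1" for i by (induction i) auto
  then show "primrec_val (\<lambda>e. 0) (\<lambda>e. e!0) (e!0) e = e!0 - 1" .
qed (intro recursive_zero recursive_proj; simp)+

lemma recursive_dec: "recursive n A \<Longrightarrow> recursive n (\<lambda>e. A e - 1)"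
  by (rule recursive_comp1[OF recursive_dec_base])

lemma recursive_diff_base: "recursive 2 (\<lambda>e. e!0 - e!1)"
proof (rule recursive_by_primrec[where B="\<lambda>e. e!0" and S="\<lambda>e. e!1 - 1" and C="\<lambda>e. e!1"])
  fix e :: "nat list"
  have "primrec_val (\<lambda>e. e!0) (\<lambda>e. e!1 - 1) i e = e!0 - i" for i by (induction i) auto
  then show "primrec_val (\<lambda>e. e!0) (\<lambda>e. e!1 - 1) (e!1) e = e!0 - e!1" .
qed (intro recursive_dec recursive_proj; simp)+

lemma recursive_add:
  "recursive n A \<Longrightarrow> recursive n B \<Longrightarrow> recursive n (\<lambda>e. A e + B e)"
  by (rule recursive_comp2[OF recursive_add_base])
lemma recursive_diff:
  "recursive n A \<Longrightarrow> recursive n B \<Longrightarrow> recursive n (\<lambda>e. A e - B e)"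
  by (rule recursive_comp2[OF recursive_diff_base])

lemma recursive_mult_base: "recursive 2 (\<lambda>e. e!0 * e!1)"
proof (rule recursive_by_primrec[where B="\<lambda>e. 0" and S="\<lambda>e. e!1 + e!3" and C="\<lambda>e. e!0"])
  fix e :: "nat list"
  have "primrec_val (\<lambda>e. 0) (\<lambda>e. e!1 + e!3) i e = i * e!1" for i by (induction i) auto
  then show "primrec_val (\<lambda>e. 0) (\<lambda>e. e!1 + e!3) (e!0) e = e!0 * e!1" .
qed (intro recursive_add recursive_zero recursive_proj; simp)+

lemma recursive_mult:
  "recursive n A \<Longrightarrow> recursive n B \<Longrightarrow> recursive n (\<lambda>e. A e * B e)"
  by (rule recursive_comp2[OF recursive_mult_base])

definition decidable :: "nat \<Rightarrow> (nat list \<Rightarrow> bool) \<Rightarrow> bool" where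
  "decidable n P \<longleftrightarrow> recursive n (\<lambda>e. if P e then 1 else 0)"

lemma decidable_comp5:
  "decidable 5 (\<lambda>e. P (e!0) (e!1) (e!2) (e!3) (e!4)) \<Longrightarrow> recursive n A1 \<Longrightarrow> recursive n A2 \<Longrightarrow> recursive n A3 \<Longrightarrow> recursive n A4 \<Longrightarrow> recursive n A5
   \<Longrightarrow> decidable n (\<lambda>e. P (A1 e) (A2 e) (A3 e) (A4 e) (A5 e))"
  unfolding decidable_def by (rule recursive_comp5[where g="\<lambda>a b c d f. if P a b c d f then 1 else 0"])

lemma decidable_eq:
  assumes "recursive n A" "recursive n B"
  shows "decidable n (\<lambda>e. A e = B e)"
  unfolding decidable_def
  by (rule recursive_cong[where F="\<lambda>e. 1 - ((A e - B e) + (B e - A e))"], (intro recursive_diff recursive_add recursive_const assms), simp)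

lemma decidable_less:
  assumes "recursive n A" "recursive n B"
  shows "decidable n (\<lambda>e. A e < B e)"
  unfolding decidable_def
  by (rule recursive_cong[where F="\<lambda>e. 1 - (1 - (B e - A e))"], (intro recursive_diff recursive_const assms), simp)

lemma decidable_le:
  assumes "recursive n A" "recursive n B"
  shows "decidable n (\<lambda>e. A e \<le> B e)"
proof -
  have "decidable n (\<lambda>e. A e < Suc (B e))" by (intro decidable_less recursive_Suc assms)
  then show ?thesis by (simp add: less_Suc_eq_le)
qed

lemma decidable_not: assumes "decidable n P" shows "decidable n (\<lambda>e. \<not> P e)"
  using assms unfolding decidable_def
  by - (rule recursive_cong[where F="\<lambda>e. 1 - (if P e then 1 else 0)"], (intro recursive_diff recursive_const; assumption), simp)

lemma decidable_conj:
  assumes "decidable n P" "decidable n Q"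
  shows "decidable n (\<lambda>e. P e \<and> Q e)"
  using assms unfolding decidable_def
  by - (rule recursive_cong[where F="\<lambda>e. (if P e then 1 else 0) * (if Q e then 1 else 0)"], (intro recursive_mult; assumption), simp)

lemma decidable_disj:
  assumes "decidable n P" "decidable n Q"
  shows "decidable n (\<lambda>e. P e \<or> Q e)"
  using assms unfolding decidable_def
  by - (rule recursive_cong[where F="\<lambda>e. 1 - (1 - (if P e then 1 else 0)) * (1 - (if Q e then 1 else 0))"],
     (intro recursive_mult recursive_diff recursive_const; assumption), simp)

lemma decidable_imp:
  assumes "decidable n P" "decidable n Q"
  shows "decidable n (\<lambda>e. P e \<longrightarrow> Q e)"
proof -
  have "decidable n (\<lambda>e. \<not> P e \<or> Q e)" by (intro decidable_disj decidable_not assms)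
  then show ?thesis by simp
qed

lemma decidable_const: "decidable n (\<lambda>e. b)"
  unfolding decidable_def by (cases b) (simp_all add: recursive_const)

lemma recursive_if:
  assumes "decidable n P" "recursive n A" "recursive n B"
  shows "recursive n (\<lambda>e. if P e then A e else B e)"
  using assms unfolding decidable_def
  by - (rule recursive_cong[where F="\<lambda>e. (if P e then 1 else 0) * A e + (1 - (if P e then 1 else 0)) * B e"],
     (intro recursive_mult recursive_diff recursive_add recursive_const; assumption), simp)

lemma recursive_drop_second:
  assumes "recursive (Suc n) P"
  shows "recursive (Suc (Suc n)) (\<lambda>e. P (e!0 # drop 2 e))"
proof -
  let ?Fs = "(\<lambda>e. e!0) # map (\<lambda>j e. e!(j+2)) [0..<n]"
  have "recursive (Suc (Suc n)) (\<lambda>e. P (map (\<lambda>F. F e) ?Fs))"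
    by (rule recursive_comp) (auto intro: recursive_proj assms)
  then show ?thesis
  proof (rule recursive_cong)
    fix e :: "nat list" assume "length e = Suc (Suc n)"
    then have "map (\<lambda>j. e!(j+2)) [0..<n] = drop 2 e"
      by (intro nth_equalityI) (auto simp: add.commute)
    then show "P (map (\<lambda>F. F e) ?Fs) = P (e!0 # drop 2 e)" by (simp add: comp_def)
  qed
qed

lemma recursive_sum_lessThan_Cons:
  assumes "recursive (Suc n) P" "recursive n Bd"
  shows "recursive n (\<lambda>e. \<Sum>i<Bd e. P (i # e))"
proof (rule recursive_by_primrec[where B="\<lambda>e. 0" and S="\<lambda>e. e!1 + P (e!0 # drop 2 e)" and C=Bd])
  show "recursive (Suc (Suc n)) (\<lambda>e. e!1 + P (e!0 # drop 2 e))"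
    by (intro recursive_add recursive_drop_second assms(1) recursive_proj) simp
  fix e :: "nat list"
  have "primrec_val (\<lambda>e. 0) (\<lambda>e. e!1 + P (e!0 # drop 2 e)) k e = (\<Sum>i<k. P (i # e))" for k
    by (induction k) auto
  then show "primrec_val (\<lambda>e. 0) (\<lambda>e. e!1 + P (e!0 # drop 2 e)) (Bd e) e = (\<Sum>i<Bd e. P (i # e))" .
qed (fact recursive_zero assms)+

lemma sum_indicator_eq_0_iff:
  "(\<Sum>i<(b::nat). if P i then 1 else (0::nat)) = 0 \<longleftrightarrow> (\<forall>i<b. \<not> P i)"
  by (subst sum_nonneg_eq_0_iff) auto

lemma decidable_ex_less_Cons:
  assumes "decidable (Suc n) P" "recursive n Bd"
  shows "decidable n (\<lambda>e. \<exists>i<Bd e. P (i # e))"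
proof -
  have "recursive n (\<lambda>e. 1 - (1 - (\<Sum>i<Bd e. (\<lambda>e'. if P e' then 1 else 0) (i # e))))"
    by (intro recursive_diff recursive_const recursive_sum_lessThan_Cons assms(2) assms(1)[unfolded decidable_def])
  then show ?thesis unfolding decidable_def
  proof (rule recursive_cong)
    fix e :: "nat list"
    show "1 - (1 - (\<Sum>i<Bd e. (\<lambda>e'. if P e' then 1 else 0) (i # e))) = (if \<exists>i<Bd e. P (i # e) then 1 else (0::nat))"
    proof (cases "\<exists>i<Bd e. P (i # e)")
      case True
      then have "(\<Sum>i<Bd e. (if P (i # e) then 1 else (0::nat))) \<noteq> 0"
        using sum_indicator_eq_0_iff[where b="Bd e" and P="\<lambda>i. P (i # e)"] by blast
      moreover have aux: "\<And>s::nat. s \<noteq> 0 \<Longrightarrow> 1 - (1 - s) = 1" by simp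
      ultimately show ?thesis by (simp only: if_P[OF True] aux)
    next
      case False
      then have "(\<Sum>i<Bd e. (if P (i # e) then 1 else (0::nat))) = 0"
        using sum_indicator_eq_0_iff[where b="Bd e" and P="\<lambda>i. P (i # e)"] by blast
      then show ?thesis using False by simp
    qed
  qed
qed

lemma decidable_all_less_Cons:
  assumes "decidable (Suc n) P" "recursive n Bd"
  shows "decidable n (\<lambda>e. \<forall>i<Bd e. P (i # e))"
proof -
  have "decidable n (\<lambda>e. \<not> (\<exists>i<Bd e. \<not> P (i # e)))"
    by (intro decidable_not decidable_ex_less_Cons decidable_not assms)
  then show ?thesis by simp
qed

lemma recursive_card_less_Cons:
  assumes "decidable (Suc n) P" "recursive n Bd"
  shows "recursive n (\<lambda>e. card {i. i < Bd e \<and> P (i # e)})"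
proof -
  have "recursive n (\<lambda>e. \<Sum>i<Bd e. (\<lambda>e'. if P e' then 1 else 0) (i # e))"
    by (intro recursive_sum_lessThan_Cons assms(2) assms(1)[unfolded decidable_def])
  then show ?thesis
  proof (rule recursive_cong)
    fix e :: "nat list"
    have "(\<Sum>i<Bd e. (if P (i # e) then 1 else (0::nat))) = card {i \<in> {..<Bd e}. P (i # e)}"
      by (simp add: sum.If_cases Int_def)
    also have "{i \<in> {..<Bd e}. P (i # e)} = {i. i < Bd e \<and> P (i # e)}" by auto
    finally show "(\<Sum>i<Bd e. (\<lambda>e'. if P e' then 1 else (0::nat)) (i # e)) = card {i. i < Bd e \<and> P (i # e)}" by simp
  qed
qed

lemma recursive_tl_nth: "j < n \<Longrightarrow> recursive (Suc n) (\<lambda>e. tl e ! j)"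
  by (rule recursive_cong[OF recursive_proj[of "Suc j"]]) (auto simp: nth_tl)
lemma recursive_tl2_nth:
  "j < n \<Longrightarrow> recursive (Suc (Suc n)) (\<lambda>e. tl (tl e) ! j)"
  by (rule recursive_cong[OF recursive_proj[of "Suc (Suc j)"]]) (auto simp: nth_tl)
lemma recursive_tl3_nth:
  "j < n \<Longrightarrow> recursive (Suc (Suc (Suc n))) (\<lambda>e. tl (tl (tl e)) ! j)"
  by (rule recursive_cong[OF recursive_proj[of "Suc (Suc (Suc j))"]]) (auto simp: nth_tl)
lemma recursive_nth0: "recursive (Suc n) (\<lambda>e. e ! 0)" by (rule recursive_proj) simp
lemma recursive_tl_nth0:
  "recursive (Suc (Suc n)) (\<lambda>e. tl e ! 0)" by (rule recursive_tl_nth) simp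
lemma recursive_tl2_nth0:
  "recursive (Suc (Suc (Suc n))) (\<lambda>e. tl (tl e) ! 0)" by (rule recursive_tl2_nth) simp

lemma recursive_tl: assumes "recursive n A" shows "recursive (Suc n) (\<lambda>e. A (tl e))"
proof -
  have "recursive (Suc n) (\<lambda>e. A (map (\<lambda>F. F e) (map (\<lambda>j e. e!(Suc j)) [0..<n])))"
    by (rule recursive_comp) (auto intro: recursive_proj assms)
  then show ?thesis
  proof (rule recursive_cong)
    fix e :: "nat list" assume "length e = Suc n"
    then have "map (\<lambda>j. e!(Suc j)) [0..<n] = tl e"
      by (intro nth_equalityI) (auto simp: nth_tl)
    then show "A (map (\<lambda>F. F e) (map (\<lambda>j e. e!(Suc j)) [0..<n])) = A (tl e)" by (simp add: comp_def)
  qed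
qed

lemma recursive_sum_lessThan:
  "recursive (Suc n) (\<lambda>e. Q (e!0) (tl e)) \<Longrightarrow> recursive n Bd \<Longrightarrow> recursive n (\<lambda>e. \<Sum>i<Bd e. Q i e)"
  using recursive_sum_lessThan_Cons[of n "\<lambda>e. Q (e!0) (tl e)" Bd] by simp
lemma decidable_ex_less:
  "decidable (Suc n) (\<lambda>e. Q (e!0) (tl e)) \<Longrightarrow> recursive n Bd \<Longrightarrow> decidable n (\<lambda>e. \<exists>i<Bd e. Q i e)"
  using decidable_ex_less_Cons[of n "\<lambda>e. Q (e!0) (tl e)" Bd] by simp
lemma decidable_all_less:
  "decidable (Suc n) (\<lambda>e. Q (e!0) (tl e)) \<Longrightarrow> recursive n Bd \<Longrightarrow> decidable n (\<lambda>e. \<forall>i<Bd e. Q i e)"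
  using decidable_all_less_Cons[of n "\<lambda>e. Q (e!0) (tl e)" Bd] by simp
lemma recursive_card_less:
  "decidable (Suc n) (\<lambda>e. Q (e!0) (tl e)) \<Longrightarrow> recursive n Bd \<Longrightarrow> recursive n (\<lambda>e. card {i. i < Bd e \<and> Q i e})"
  using recursive_card_less_Cons[of n "\<lambda>e. Q (e!0) (tl e)" Bd] by simp

lemmas recursive_arith_intros = recursive_add recursive_diff recursive_mult recursive_Suc recursive_dec recursive_const recursive_if
  decidable_eq decidable_less decidable_le decidable_not decidable_conj decidable_disj decidable_imp decidable_const
  recursive_sum_lessThan decidable_ex_less decidable_all_less recursive_card_less recursive_nth0 recursive_tl_nth0 recursive_tl2_nth0 recursive_tl_nth recursive_tl2_nth recursive_tl3_nth recursive_proj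

section \<open>Coding pairs and lists of numbers\<close>

lemma recursive_triangle_base: "recursive 1 (\<lambda>e. triangle (e!0))"
proof (rule recursive_by_primrec[where B="\<lambda>e. 0" and S="\<lambda>e. e!1 + Suc (e!0)" and C="\<lambda>e. e!0"])
  fix e :: "nat list"
  have "primrec_val (\<lambda>e. 0) (\<lambda>e. e!1 + Suc (e!0)) i e = triangle i" for i by (induction i) auto
  then show "primrec_val (\<lambda>e. 0) (\<lambda>e. e!1 + Suc (e!0)) (e!0) e = triangle (e!0)" .
qed (intro recursive_zero recursive_add recursive_Suc recursive_proj; simp)+

lemma recursive_triangle: "recursive n A \<Longrightarrow> recursive n (\<lambda>e. triangle (A e))"
  by (rule recursive_comp1[OF recursive_triangle_base])

lemma recursive_prod_encode_base: "recursive 2 (\<lambda>e. prod_encode (e!0, e!1))"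
  unfolding prod_encode_def by (simp, intro recursive_add recursive_triangle recursive_proj; simp)

lemma recursive_prod_encode:
  "recursive n A \<Longrightarrow> recursive n B \<Longrightarrow> recursive n (\<lambda>e. prod_encode (A e, B e))"
  using recursive_comp2[OF recursive_prod_encode_base] .

definition pfst :: "nat \<Rightarrow> nat" where "pfst z = fst (prod_decode z)"
definition psnd :: "nat \<Rightarrow> nat" where "psnd z = snd (prod_decode z)"

lemma pfst_prod_encode[simp]: "pfst (prod_encode (a, b)) = a" by (simp add: pfst_def)
lemma psnd_prod_encode[simp]: "psnd (prod_encode (a, b)) = b" by (simp add: psnd_def)
lemma prod_encode_pfst_psnd: "prod_encode (pfst z, psnd z) = z"
  by (simp add: pfst_def psnd_def)
lemma pfst_le: "pfst z \<le> z" by (metis prod_encode_pfst_psnd le_prod_encode_1)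
lemma psnd_le: "psnd z \<le> z" by (metis prod_encode_pfst_psnd le_prod_encode_2)

lemma ex_prod_encode_eq_iff_pfst:
  "(\<exists>b<Suc z. prod_encode (a, b) = z) \<longleftrightarrow> a = pfst z"
proof
  assume "\<exists>b<Suc z. prod_encode (a, b) = z"
  then obtain b where "prod_encode (a, b) = z" by blast
  then show "a = pfst z" by (metis pfst_prod_encode)
next
  assume "a = pfst z"
  then show "\<exists>b<Suc z. prod_encode (a, b) = z"
    using prod_encode_pfst_psnd[of z] psnd_le[of z] by (intro exI[of _ "psnd z"]) auto
qed

lemma ex_prod_encode_eq_iff_psnd:
  "(\<exists>a<Suc z. prod_encode (a, b) = z) \<longleftrightarrow> b = psnd z"
proof
  assume "\<exists>a<Suc z. prod_encode (a, b) = z"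
  then obtain a where "prod_encode (a, b) = z" by blast
  then show "b = psnd z" by (metis psnd_prod_encode)
next
  assume "b = psnd z"
  then show "\<exists>a<Suc z. prod_encode (a, b) = z"
    using prod_encode_pfst_psnd[of z] pfst_le[of z] by (intro exI[of _ "pfst z"]) auto
qed

lemma recursive_pfst_base: "recursive 1 (\<lambda>e. pfst (e!0))"
proof -
  have "recursive 1 (\<lambda>e. \<Sum>a<Suc (e!0). a * (if \<exists>b<Suc (e!0). prod_encode (a, b) = e!0 then 1 else 0))"
    by (intro recursive_arith_intros recursive_prod_encode recursive_if; simp)
  then show ?thesis
  proof (rule recursive_cong)
    fix e :: "nat list"
    let ?z = "e!0"
    have "(\<Sum>a<Suc ?z. a * (if \<exists>b<Suc ?z. prod_encode (a, b) = ?z then 1 else 0))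
        = (\<Sum>a<Suc ?z. (if a = pfst ?z then a else 0))"
      by (intro sum.cong) (auto simp: ex_prod_encode_eq_iff_pfst)
    also have "\<dots> = pfst ?z" using pfst_le[of ?z] by (simp add: sum.delta')
    finally show "(\<Sum>a<Suc ?z. a * (if \<exists>b<Suc ?z. prod_encode (a, b) = ?z then 1 else 0)) = pfst ?z" .
  qed
qed

lemma recursive_psnd_base: "recursive 1 (\<lambda>e. psnd (e!0))"
proof -
  have "recursive 1 (\<lambda>e. \<Sum>b<Suc (e!0). b * (if \<exists>a<Suc (e!0). prod_encode (a, b) = e!0 then 1 else 0))"
    by (intro recursive_arith_intros recursive_prod_encode recursive_if; simp)
  then show ?thesis
  proof (rule recursive_cong)
    fix e :: "nat list"
    let ?z = "e!0"
    have "(\<Sum>b<Suc ?z. b * (if \<exists>a<Suc ?z. prod_encode (a, b) = ?z then 1 else 0))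
        = (\<Sum>b<Suc ?z. (if b = psnd ?z then b else 0))"
      by (intro sum.cong) (auto simp: ex_prod_encode_eq_iff_psnd)
    also have "\<dots> = psnd ?z" using psnd_le[of ?z] by (simp add: sum.delta')
    finally show "(\<Sum>b<Suc ?z. b * (if \<exists>a<Suc ?z. prod_encode (a, b) = ?z then 1 else 0)) = psnd ?z" .
  qed
qed

lemma recursive_pfst:
  "recursive n A \<Longrightarrow> recursive n (\<lambda>e. pfst (A e))" by (rule recursive_comp1[OF recursive_pfst_base])
lemma recursive_psnd:
  "recursive n A \<Longrightarrow> recursive n (\<lambda>e. psnd (A e))" by (rule recursive_comp1[OF recursive_psnd_base])

definition nhd :: "nat \<Rightarrow> nat" where "nhd l = pfst (l - 1)"
definition ntl :: "nat \<Rightarrow> nat" where "ntl l = psnd (l - 1)"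
definition ncons :: "nat \<Rightarrow> nat \<Rightarrow> nat" where "ncons a l = Suc (prod_encode (a, l))"
definition nnth :: "nat \<Rightarrow> nat \<Rightarrow> nat" where "nnth l i = nhd ((ntl ^^ i) l)"
definition nlength :: "nat \<Rightarrow> nat" where "nlength l = card {i. i < l \<and> (ntl ^^ i) l \<noteq> 0}"

lemma recursive_nhd: "recursive n A \<Longrightarrow> recursive n (\<lambda>e. nhd (A e))"
  unfolding nhd_def by (intro recursive_pfst recursive_dec)
lemma recursive_ntl: "recursive n A \<Longrightarrow> recursive n (\<lambda>e. ntl (A e))"
  unfolding ntl_def by (intro recursive_psnd recursive_dec)
lemma recursive_ncons:
  "recursive n A \<Longrightarrow> recursive n B \<Longrightarrow> recursive n (\<lambda>e. ncons (A e) (B e))"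
  unfolding ncons_def by (intro recursive_Suc recursive_prod_encode)

lemma recursive_ntl_funpow_base: "recursive 2 (\<lambda>e. (ntl ^^ (e!0)) (e!1))"
proof (rule recursive_by_primrec[where B="\<lambda>e. e!1" and S="\<lambda>e. ntl (e!1)" and C="\<lambda>e. e!0"])
  fix e :: "nat list"
  have "primrec_val (\<lambda>e. e!1) (\<lambda>e. ntl (e!1)) i e = (ntl ^^ i) (e!1)" for i by (induction i) auto
  then show "primrec_val (\<lambda>e. e!1) (\<lambda>e. ntl (e!1)) (e!0) e = (ntl ^^ (e!0)) (e!1)" .
qed (intro recursive_ntl recursive_proj; simp)+

lemma recursive_ntl_funpow:
  "recursive n A \<Longrightarrow> recursive n B \<Longrightarrow> recursive n (\<lambda>e. (ntl ^^ (A e)) (B e))"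
  by (rule recursive_comp2[OF recursive_ntl_funpow_base])

lemma recursive_nnth:
  "recursive n A \<Longrightarrow> recursive n B \<Longrightarrow> recursive n (\<lambda>e. nnth (A e) (B e))"
  unfolding nnth_def by (intro recursive_nhd recursive_ntl_funpow)

lemma recursive_nlength: "recursive n A \<Longrightarrow> recursive n (\<lambda>e. nlength (A e))"
  unfolding nlength_def by (intro recursive_arith_intros recursive_ntl_funpow recursive_tl; assumption?)

lemma ntl_0[simp]: "ntl 0 = 0"
  by (simp add: ntl_def psnd_def prod_decode_def prod_decode_aux.simps)
lemma ntl_Suc_prod_encode[simp]: "ntl (Suc (prod_encode (x, y))) = y"
  by (simp add: ntl_def)
lemma nhd_Suc_prod_encode[simp]: "nhd (Suc (prod_encode (x, y))) = x"
  by (simp add: nhd_def)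
lemma ntl_funpow_0[simp]: "(ntl ^^ i) 0 = 0"
  by (induction i) auto
lemma ncons_list_encode[simp]: "ncons x (list_encode xs) = list_encode (x # xs)"
  by (simp add: ncons_def)

lemma ntl_funpow_list_encode: "(ntl ^^ i) (list_encode xs) = list_encode (drop i xs)"
proof (induction i arbitrary: xs)
  case (Suc i)
  then show ?case by (cases xs) (simp_all add: funpow_swap1)
qed simp

lemma nnth_list_encode[simp]: "i < length xs \<Longrightarrow> nnth (list_encode xs) i = xs ! i"
  unfolding nnth_def ntl_funpow_list_encode by (simp add: hd_drop_conv_nth Cons_nth_drop_Suc[symmetric])

lemma length_le_list_encode: "length xs \<le> list_encode xs"
proof (induction xs)
  case (Cons x xs)
  then show ?case using le_prod_encode_2[of "list_encode xs" x] by simp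
qed simp

lemma list_encode_eq_0_iff[simp]: "list_encode xs = 0 \<longleftrightarrow> xs = []"
  by (cases xs) auto

lemma nlength_list_encode[simp]: "nlength (list_encode xs) = length xs"
proof -
  have "{i. i < list_encode xs \<and> (ntl ^^ i) (list_encode xs) \<noteq> 0} = {..<length xs}"
    using length_le_list_encode[of xs] by (auto simp: ntl_funpow_list_encode)
  then show ?thesis unfolding nlength_def by simp
qed

section \<open>A universal function\<close>

fun recf_encode :: "recf \<Rightarrow> nat" where
  "recf_encode Zero = prod_encode (0, 0)"
| "recf_encode Succ = prod_encode (1, 0)"
| "recf_encode (Proj i) = prod_encode (2, i)"
| "recf_encode (Comp f gs) = prod_encode (3, prod_encode (recf_encode f, list_encode (map recf_encode gs)))"
| "recf_encode (Prim f g) = prod_encode (4, prod_encode (recf_encode f, recf_encode g))"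
| "recf_encode (Mn f) = prod_encode (5, recf_encode f)"

type_synonym judgement = "nat \<times> nat list \<times> nat"

text \<open>A judgement \<open>(c, xs, y)\<close> states that the program with code \<open>c\<close> maps \<open>xs\<close> to \<open>y\<close>; the first
  component of a code is its constructor tag.\<close>

definition justified :: "judgement list \<Rightarrow> judgement \<Rightarrow> bool" where
"justified E J \<longleftrightarrow> (case J of (c, xs, y) \<Rightarrow>
   (pfst c = 0 \<and> y = 0) \<or>
   (pfst c = 1 \<and> xs \<noteq> [] \<and> y = Suc (hd xs)) \<or>
   (pfst c = 2 \<and> psnd c < length xs \<and> y = xs ! psnd c) \<or>
   (pfst c = 3 \<and> (\<exists>ys. (pfst (psnd c), ys, y) \<in> set E \<and> length ys = length (list_decode (psnd (psnd c))) \<and>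
        (\<forall>i<length ys. (list_decode (psnd (psnd c)) ! i, xs, ys ! i) \<in> set E))) \<or>
   (pfst c = 4 \<and> xs \<noteq> [] \<and> ((hd xs = 0 \<and> (pfst (psnd c), tl xs, y) \<in> set E) \<or>
        (hd xs \<noteq> 0 \<and> (\<exists>w. (c, (hd xs - 1) # tl xs, w) \<in> set E \<and> (psnd (psnd c), (hd xs - 1) # w # tl xs, y) \<in> set E)))) \<or>
   (pfst c = 5 \<and> (psnd c, y # xs, 0) \<in> set E \<and> (\<forall>m<y. \<exists>k. (psnd c, m # xs, Suc k) \<in> set E)))"

definition valid_derivation :: "judgement list \<Rightarrow> bool" where
  "valid_derivation cs \<longleftrightarrow> (\<forall>j<length cs. justified (take j cs) (cs ! j))"

lemma justified_sound:
  assumes J: "justified E (recf_encode f, xs, y)"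
    and IH: "\<And>f' xs' y'. (recf_encode f', xs', y') \<in> set E \<Longrightarrow> eval f' xs' y'"
  shows "eval f xs y"
proof (cases f)
  case Zero
  with J show ?thesis by (auto simp: justified_def intro: eval.zero)
next
  case Succ
  with J have "xs \<noteq> [] \<and> y = Suc (hd xs)" by (auto simp: justified_def)
  then show ?thesis using Succ by (cases xs) (auto intro: eval.succ)
next
  case (Proj i)
  with J have "i < length xs \<and> y = xs ! i" by (auto simp: justified_def)
  then show ?thesis using Proj by (auto intro: eval.proj)
next
  case (Comp g gs)
  with J obtain ys where ys: "(recf_encode g, ys, y) \<in> set E"
    "length ys = length gs" "\<forall>i<length ys. (recf_encode (gs ! i), xs, ys ! i) \<in> set E"
    by (auto simp: justified_def)
  have "list_all2 (\<lambda>g y. eval g xs y) gs ys"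
    using ys(2,3) IH by (auto simp: list_all2_conv_all_nth)
  moreover have "eval g ys y" using IH ys(1) by blast
  ultimately show ?thesis using Comp by (auto intro: eval.comp)
next
  case (Prim g h)
  with J obtain n xs' where xs: "xs = n # xs'"
    and r: "(n = 0 \<and> (recf_encode g, xs', y) \<in> set E) \<or>
      (n \<noteq> 0 \<and> (\<exists>w. (recf_encode f, (n - 1) # xs', w) \<in> set E \<and> (recf_encode h, (n - 1) # w # xs', y) \<in> set E))"
    by (cases xs) (auto simp: justified_def)
  show ?thesis
  proof (cases n)
    case 0
    with r have "eval g xs' y" using IH by blast
    then show ?thesis using Prim xs 0 by (auto intro: eval.prim0)
  next
    case (Suc n')
    with r obtain w where "(recf_encode f, n' # xs', w) \<in> set E" "(recf_encode h, n' # w # xs', y) \<in> set E"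
      by auto
    then have "eval (Prim g h) (n' # xs') w" "eval h (n' # w # xs') y"
      using IH Prim by blast+
    then show ?thesis using Prim xs Suc by (auto intro: eval.primS)
  qed
next
  case (Mn g)
  with J have r: "(recf_encode g, y # xs, 0) \<in> set E" "\<forall>m<y. \<exists>k. (recf_encode g, m # xs, Suc k) \<in> set E"
    by (auto simp: justified_def)
  have "eval g (y # xs) 0" using IH r(1) by blast
  moreover have "\<forall>m<y. \<exists>k. eval g (m # xs) (Suc k)" using IH r(2) by blast
  ultimately show ?thesis using Mn by (auto intro: eval.mu)
qed

lemma valid_derivation_sound:
  assumes "valid_derivation cs" "(recf_encode f, xs, y) \<in> set cs"
  shows "eval f xs y"
proof -
  have "eval f xs y" if "j < length cs" "cs ! j = (recf_encode f, xs, y)" for j f xs y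
    using that
  proof (induction j arbitrary: f xs y rule: less_induct)
    case (less j)
    have "justified (take j cs) (recf_encode f, xs, y)"
      using assms(1) less.prems unfolding valid_derivation_def by metis
    moreover have "eval f' xs' y'" if "(recf_encode f', xs', y') \<in> set (take j cs)" for f' xs' y'
      using that less.IH less.prems(1) by (auto simp: in_set_conv_nth)
    ultimately show ?case by (rule justified_sound)
  qed
  then show ?thesis using assms(2) by (auto simp: in_set_conv_nth)
qed

lemma justified_mono:
  "justified E J \<Longrightarrow> set E \<subseteq> set E' \<Longrightarrow> justified E' J"
  unfolding justified_def by (cases J) (simp, blast)

lemma valid_derivation_append:
  assumes "valid_derivation cs1" "valid_derivation cs2"
  shows "valid_derivation (cs1 @ cs2)"
  unfolding valid_derivation_def
proof (intro allI impI)
  fix j assume j: "j < length (cs1 @ cs2)"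
  show "justified (take j (cs1 @ cs2)) ((cs1 @ cs2) ! j)"
  proof (cases "j < length cs1")
    case True
    then show ?thesis using assms(1) unfolding valid_derivation_def by (simp add: nth_append)
  next
    case False
    define j' where "j' = j - length cs1"
    have "j' < length cs2" using j False j'_def by simp
    then have "justified (take j' cs2) (cs2 ! j')" using assms(2) unfolding valid_derivation_def by blast
    moreover have "set (take j' cs2) \<subseteq> set (take j (cs1 @ cs2))" using False j'_def by auto
    ultimately show ?thesis using False j'_def by (auto simp: nth_append intro: justified_mono)
  qed
qed

lemma valid_derivation_snoc:
  assumes "valid_derivation cs" "justified cs J"
  shows "valid_derivation (cs @ [J])"
  unfolding valid_derivation_def
proof (intro allI impI)
  fix j assume j: "j < length (cs @ [J])"
  show "justified (take j (cs @ [J])) ((cs @ [J]) ! j)"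
  proof (cases "j < length cs")
    case True
    then show ?thesis using assms(1) unfolding valid_derivation_def by (simp add: nth_append)
  next
    case False
    then have "j = length cs" using j by simp
    then show ?thesis using assms(2) by simp
  qed
qed

lemma valid_derivation_Nil: "valid_derivation []" by (simp add: valid_derivation_def)

lemma valid_derivation_list_all2:
  "list_all2 (\<lambda>g y. \<exists>cs. valid_derivation cs \<and> (recf_encode g, xs, y) \<in> set cs) gs ys \<Longrightarrow>
   \<exists>cs. valid_derivation cs \<and> (\<forall>i<length gs. (recf_encode (gs ! i), xs, ys ! i) \<in> set cs)"
proof (induction rule: list_all2_induct)
  case Nil then show ?case using valid_derivation_Nil by auto
next
  case (Cons g gs y ys)
  from Cons.hyps(1) obtain cs1 where 1: "valid_derivation cs1" "(recf_encode g, xs, y) \<in> set cs1" by blast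
  from Cons.IH obtain cs2 where 2: "valid_derivation cs2" "\<forall>i<length gs. (recf_encode (gs ! i), xs, ys ! i) \<in> set cs2" by blast
  have "\<forall>i<length (g # gs). (recf_encode ((g # gs) ! i), xs, (y # ys) ! i) \<in> set (cs1 @ cs2)"
  proof (intro allI impI)
    fix i assume "i < length (g # gs)"
    then show "(recf_encode ((g # gs) ! i), xs, (y # ys) ! i) \<in> set (cs1 @ cs2)"
      using 1 2 by (cases i) auto
  qed
  then show ?case using valid_derivation_append[OF 1(1) 2(1)] by blast
qed

lemma valid_derivation_all_less:
  "\<forall>m<n. \<exists>k cs. valid_derivation cs \<and> (a, m # xs, Suc k) \<in> set cs \<Longrightarrow>
   \<exists>cs. valid_derivation cs \<and> (\<forall>m<n. \<exists>k. (a, m # xs, Suc k) \<in> set cs)"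
proof (induction n)
  case 0 then show ?case using valid_derivation_Nil by auto
next
  case (Suc n)
  then obtain cs1 where 1: "valid_derivation cs1" "\<forall>m<n. \<exists>k. (a, m # xs, Suc k) \<in> set cs1" by auto
  from Suc.prems obtain k cs2 where 2: "valid_derivation cs2" "(a, n # xs, Suc k) \<in> set cs2" by blast
  have "\<forall>m<Suc n. \<exists>k. (a, m # xs, Suc k) \<in> set (cs1 @ cs2)"
    using 1(2) 2(2) by (auto simp: less_Suc_eq)
  then show ?case using valid_derivation_append[OF 1(1) 2(1)] by blast
qed

lemma valid_derivation_complete:
  "eval f xs y \<Longrightarrow> \<exists>cs. valid_derivation cs \<and> (recf_encode f, xs, y) \<in> set cs"
proof (induction rule: eval.induct)
  case (zero xs)
  have "valid_derivation ([] @ [(recf_encode Zero, xs, 0)])" by (rule valid_derivation_snoc[OF valid_derivation_Nil]) (simp add: justified_def)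
  then show ?case by auto
next
  case (succ x xs)
  have "valid_derivation ([] @ [(recf_encode Succ, x # xs, Suc x)])" by (rule valid_derivation_snoc[OF valid_derivation_Nil]) (simp add: justified_def)
  then show ?case by auto
next
  case (proj i xs)
  have "valid_derivation ([] @ [(recf_encode (Proj i), xs, xs ! i)])" by (rule valid_derivation_snoc[OF valid_derivation_Nil]) (simp add: justified_def proj)
  then show ?case by auto
next
  case (comp xs gs ys f z)
  have "list_all2 (\<lambda>g y. \<exists>cs. valid_derivation cs \<and> (recf_encode g, xs, y) \<in> set cs) gs ys"
    using comp.IH(1) by (rule list_all2_mono) blast
  from valid_derivation_list_all2[OF this] obtain cs1 where 1: "valid_derivation cs1" "\<forall>i<length gs. (recf_encode (gs ! i), xs, ys ! i) \<in> set cs1" by blast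
  from comp.IH(2) obtain cs2 where 2: "valid_derivation cs2" "(recf_encode f, ys, z) \<in> set cs2" by blast
  have len: "length ys = length gs" using comp.IH(1) by (simp add: list_all2_lengthD)
  have "justified (cs1 @ cs2) (recf_encode (Comp f gs), xs, z)"
    unfolding justified_def using 1(2) 2(2) len by (simp, intro exI[of _ ys]) auto
  then have "valid_derivation ((cs1 @ cs2) @ [(recf_encode (Comp f gs), xs, z)])"
    by (intro valid_derivation_snoc valid_derivation_append 1(1) 2(1))
  then show ?case by auto
next
  case (prim0 f xs z g)
  from prim0.IH obtain cs where 1: "valid_derivation cs" "(recf_encode f, xs, z) \<in> set cs" by blast
  have "justified cs (recf_encode (Prim f g), 0 # xs, z)" unfolding justified_def using 1(2) by simp
  then have "valid_derivation (cs @ [(recf_encode (Prim f g), 0 # xs, z)])" by (intro valid_derivation_snoc 1(1))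
  then show ?case by auto
next
  case (primS f g n xs y z)
  from primS.IH(1) obtain cs1 where 1: "valid_derivation cs1" "(recf_encode (Prim f g), n # xs, y) \<in> set cs1" by blast
  from primS.IH(2) obtain cs2 where 2: "valid_derivation cs2" "(recf_encode g, n # y # xs, z) \<in> set cs2" by blast
  have "justified (cs1 @ cs2) (recf_encode (Prim f g), Suc n # xs, z)"
    unfolding justified_def using 1(2) 2(2) by (simp, intro exI[of _ y]) simp
  then have "valid_derivation ((cs1 @ cs2) @ [(recf_encode (Prim f g), Suc n # xs, z)])"
    by (intro valid_derivation_snoc valid_derivation_append 1(1) 2(1))
  then show ?case by auto
next
  case (mu f n xs)
  from mu.IH(1) obtain cs1 where 1: "valid_derivation cs1" "(recf_encode f, n # xs, 0) \<in> set cs1" by blast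
  have "\<forall>m<n. \<exists>k cs. valid_derivation cs \<and> (recf_encode f, m # xs, Suc k) \<in> set cs" using mu.IH(2) by blast
  from valid_derivation_all_less[OF this] obtain cs2 where 2: "valid_derivation cs2" "\<forall>m<n. \<exists>k. (recf_encode f, m # xs, Suc k) \<in> set cs2" by blast
  have "justified (cs1 @ cs2) (recf_encode (Mn f), xs, n)"
    unfolding justified_def using 1(2) 2(2) by (simp; blast)
  then have "valid_derivation ((cs1 @ cs2) @ [(recf_encode (Mn f), xs, n)])"
    by (intro valid_derivation_snoc valid_derivation_append 1(1) 2(1))
  then show ?case by auto
qed

definition jprog :: "nat \<Rightarrow> nat" where "jprog E = pfst E"
definition jinput :: "nat \<Rightarrow> nat" where "jinput E = pfst (psnd E)"
definition joutput :: "nat \<Rightarrow> nat" where "joutput E = psnd (psnd E)"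

lemma recursive_jprog:
  "recursive n A \<Longrightarrow> recursive n (\<lambda>e. jprog (A e))"
  unfolding jprog_def by (intro recursive_pfst)
lemma recursive_jinput:
  "recursive n A \<Longrightarrow> recursive n (\<lambda>e. jinput (A e))"
  unfolding jinput_def by (intro recursive_pfst recursive_psnd)
lemma recursive_joutput:
  "recursive n A \<Longrightarrow> recursive n (\<lambda>e. joutput (A e))"
  unfolding joutput_def by (intro recursive_psnd)

lemmas recursive_intros = recursive_arith_intros recursive_pfst recursive_psnd recursive_prod_encode
  recursive_nhd recursive_ntl recursive_ncons recursive_nnth recursive_nlength
  recursive_jprog recursive_jinput recursive_joutput

text \<open>The condition \<open>justified\<close> for the \<open>j\<close>-th entry of a coded derivation \<open>C\<close>, read off the
  codes; the unbounded quantifiers of \<open>justified\<close> become searches through the entries before \<open>j\<close>.\<close>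

definition justified_num :: "nat \<Rightarrow> nat \<Rightarrow> nat \<Rightarrow> nat \<Rightarrow> nat \<Rightarrow> bool" where
"justified_num c l y C j \<longleftrightarrow>
   (pfst c = 0 \<and> y = 0) \<or>
   (pfst c = 1 \<and> l \<noteq> 0 \<and> y = Suc (nhd l)) \<or>
   (pfst c = 2 \<and> psnd c < nlength l \<and> y = nnth l (psnd c)) \<or>
   (pfst c = 3 \<and> (\<exists>k<j. jprog (nnth C k) = pfst (psnd c) \<and> joutput (nnth C k) = y \<and> nlength (jinput (nnth C k)) = nlength (psnd (psnd c)) \<and>
        (\<forall>i<nlength (psnd (psnd c)). \<exists>k'<j. nnth C k' = prod_encode (nnth (psnd (psnd c)) i, prod_encode (l, nnth (jinput (nnth C k)) i))))) \<or>
   (pfst c = 4 \<and> l \<noteq> 0 \<and> ((nhd l = 0 \<and> (\<exists>k<j. nnth C k = prod_encode (pfst (psnd c), prod_encode (ntl l, y)))) \<or>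
        (nhd l \<noteq> 0 \<and> (\<exists>k<j. jprog (nnth C k) = c \<and> jinput (nnth C k) = ncons (nhd l - 1) (ntl l) \<and>
            (\<exists>k'<j. nnth C k' = prod_encode (psnd (psnd c), prod_encode (ncons (nhd l - 1) (ncons (joutput (nnth C k)) (ntl l)), y))))))) \<or>
   (pfst c = 5 \<and> (\<exists>k<j. nnth C k = prod_encode (psnd c, prod_encode (ncons y l, 0))) \<and>
        (\<forall>m<y. \<exists>k<j. jprog (nnth C k) = psnd c \<and> jinput (nnth C k) = ncons m l \<and> joutput (nnth C k) \<noteq> 0))"

lemma decidable_justified_num:
  "decidable 5 (\<lambda>e. justified_num (e!0) (e!1) (e!2) (e!3) (e!4))"
  unfolding justified_num_def by (intro recursive_intros; simp)

definition justified_code :: "nat \<Rightarrow> nat \<Rightarrow> bool" where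
  "justified_code C j \<longleftrightarrow> justified_num (jprog (nnth C j)) (jinput (nnth C j)) (joutput (nnth C j)) C j"

definition valid_derivation_code :: "nat \<Rightarrow> bool" where
  "valid_derivation_code C \<longleftrightarrow> (\<forall>j<nlength C. justified_code C j)"

lemma decidable_justified_code:
  "recursive n A \<Longrightarrow> recursive n B \<Longrightarrow> decidable n (\<lambda>e. justified_code (A e) (B e))"
  unfolding justified_code_def by (intro decidable_comp5[OF decidable_justified_num] recursive_intros)

lemma decidable_valid_derivation_code:
  "recursive n A \<Longrightarrow> decidable n (\<lambda>e. valid_derivation_code (A e))"
  unfolding valid_derivation_code_def by (intro recursive_intros decidable_justified_code recursive_tl; assumption?)

definition certifies :: "nat \<Rightarrow> nat \<Rightarrow> nat \<Rightarrow> bool" where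
  "certifies w c v \<longleftrightarrow> valid_derivation_code (pfst w) \<and> (\<exists>k<nlength (pfst w). nnth (pfst w) k = prod_encode (c, prod_encode (ncons v 0, psnd w)))"

lemma decidable_certifies: "decidable 3 (\<lambda>e. certifies (e!0) (e!1) (e!2))"
  unfolding certifies_def by (intro recursive_intros decidable_valid_derivation_code; simp)

definition judgement_encode :: "judgement \<Rightarrow> nat" where
  "judgement_encode J = (case J of (c, xs, y) \<Rightarrow> prod_encode (c, prod_encode (list_encode xs, y)))"

definition derivation_encode :: "judgement list \<Rightarrow> nat" where "derivation_encode cs = list_encode (map judgement_encode cs)"

lemma nnth_derivation_encode_less:
  "k < length cs \<Longrightarrow> nnth (derivation_encode cs) k = judgement_encode (cs ! k)"
  unfolding derivation_encode_def by simp

lemma nlength_derivation_encode[simp]: "nlength (derivation_encode cs) = length cs"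
  unfolding derivation_encode_def by simp

definition derivation_entry :: "judgement list \<Rightarrow> nat \<Rightarrow> judgement" where
  "derivation_entry cs k = (if k < length cs then cs ! k else (0, [], 0))"

lemma nnth_derivation_encode[simp]:
  "nnth (derivation_encode cs) k = judgement_encode (derivation_entry cs k)"
proof (cases "k < length cs")
  case True then show ?thesis by (simp add: nnth_derivation_encode_less derivation_entry_def)
next
  case False
  have "(ntl ^^ k) (derivation_encode cs) = 0" unfolding derivation_encode_def ntl_funpow_list_encode using False by simp
  have p0: "prod_encode (0, 0) = 0" by (simp add: prod_encode_def)
  have "pfst 0 = 0" using pfst_prod_encode[of 0 0] unfolding p0 .
  then show ?thesis using False \<open>(ntl ^^ k) (derivation_encode cs) = 0\<close>
    by (simp add: nnth_def derivation_entry_def judgement_encode_def nhd_def p0)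
qed

lemma mem_take_iff_derivation_entry:
  assumes "j \<le> length cs"
  shows "X \<in> set (take j cs) \<longleftrightarrow> (\<exists>k<j. derivation_entry cs k = X)"
proof
  assume "X \<in> set (take j cs)"
  then obtain k where "k < length (take j cs)" "take j cs ! k = X" unfolding in_set_conv_nth by blast
  then have "k < j" "derivation_entry cs k = X" using assms by (simp_all add: derivation_entry_def)
  then show "\<exists>k<j. derivation_entry cs k = X" by blast
next
  assume "\<exists>k<j. derivation_entry cs k = X"
  then obtain k where "k < j" "derivation_entry cs k = X" by blast
  then have "k < length (take j cs)" "take j cs ! k = X" using assms by (simp_all add: derivation_entry_def)
  then show "X \<in> set (take j cs)" unfolding in_set_conv_nth by blast
qed

lemma jprog_judgement_encode[simp]:
  "jprog (judgement_encode J) = fst J" by (cases J) (simp add: jprog_def judgement_encode_def)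
lemma jinput_judgement_encode[simp]:
  "jinput (judgement_encode J) = list_encode (fst (snd J))" by (cases J) (simp add: jinput_def judgement_encode_def)
lemma joutput_judgement_encode[simp]:
  "joutput (judgement_encode J) = snd (snd J)" by (cases J) (simp add: joutput_def judgement_encode_def)
lemma judgement_encode_eq_iff[simp]:
  "judgement_encode J = prod_encode (a, prod_encode (l, z)) \<longleftrightarrow> J = (a, list_decode l, z)"
proof (cases J)
  case (fields c xs y)
  have "judgement_encode J = prod_encode (a, prod_encode (l, z)) \<longleftrightarrow> c = a \<and> list_encode xs = l \<and> y = z"
    unfolding fields judgement_encode_def by simp
  also have "\<dots> \<longleftrightarrow> c = a \<and> xs = list_decode l \<and> y = z" by (metis list_encode_inverse list_decode_inverse)
  finally show ?thesis using fields by simp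
qed

lemma justified_num_comp_iff:
  assumes j: "j \<le> length cs"
  shows "(\<exists>k<j. jprog (nnth (derivation_encode cs) k) = A \<and> joutput (nnth (derivation_encode cs) k) = y \<and>
      nlength (jinput (nnth (derivation_encode cs) k)) = nlength (list_encode gs) \<and>
      (\<forall>i<nlength (list_encode gs). \<exists>k'<j. nnth (derivation_encode cs) k' = prod_encode (nnth (list_encode gs) i,
          prod_encode (list_encode xs, nnth (jinput (nnth (derivation_encode cs) k)) i))))
   \<longleftrightarrow> (\<exists>ys. (A, ys, y) \<in> set (take j cs) \<and> length ys = length gs \<and>
        (\<forall>i<length ys. (gs ! i, xs, ys ! i) \<in> set (take j cs)))" (is "?L \<longleftrightarrow> ?R")
proof
  assume ?L
  then obtain k where k0: "k < j" and k1: "jprog (nnth (derivation_encode cs) k) = A \<and> joutput (nnth (derivation_encode cs) k) = y \<and>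
      nlength (jinput (nnth (derivation_encode cs) k)) = nlength (list_encode gs) \<and>
      (\<forall>i<nlength (list_encode gs). \<exists>k'<j. nnth (derivation_encode cs) k' = prod_encode (nnth (list_encode gs) i,
          prod_encode (list_encode xs, nnth (jinput (nnth (derivation_encode cs) k)) i)))" by blast
  from k1 have k: "k < j" "fst (derivation_entry cs k) = A" "snd (snd (derivation_entry cs k)) = y"
    "length (fst (snd (derivation_entry cs k))) = length gs"
    "\<forall>i<length gs. \<exists>k'<j. judgement_encode (derivation_entry cs k') = prod_encode (gs ! i,
          prod_encode (list_encode xs, nnth (list_encode (fst (snd (derivation_entry cs k)))) i))"
    using k0 unfolding nnth_derivation_encode jprog_judgement_encode joutput_judgement_encode jinput_judgement_encode nlength_list_encode by auto
  define ys where "ys = fst (snd (derivation_entry cs k))"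
  have "derivation_entry cs k = (A, ys, y)" using k(2,3) ys_def by (cases "derivation_entry cs k") auto
  then have 1: "(A, ys, y) \<in> set (take j cs)" using k(1) j mem_take_iff_derivation_entry by blast
  have 2: "(gs ! i, xs, ys ! i) \<in> set (take j cs)" if "i < length ys" for i
  proof -
    from that k(4) k(5) obtain k' where "k' < j" "judgement_encode (derivation_entry cs k') = prod_encode (gs ! i,
          prod_encode (list_encode xs, nnth (list_encode ys) i))" unfolding ys_def by auto
    then have "k' < j" "derivation_entry cs k' = (gs ! i, xs, ys ! i)" using that by auto
    then show ?thesis using j mem_take_iff_derivation_entry by blast
  qed
  show ?R using 1 2 k(4) ys_def by blast
next
  assume ?R
  then obtain ys where ys: "(A, ys, y) \<in> set (take j cs)" "length ys = length gs"
     "\<forall>i<length ys. (gs ! i, xs, ys ! i) \<in> set (take j cs)" by blast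
  from ys(1) obtain k where k: "k < j" "derivation_entry cs k = (A, ys, y)" using j mem_take_iff_derivation_entry by blast
  have "\<exists>k'<j. judgement_encode (derivation_entry cs k') = prod_encode (gs ! i, prod_encode (list_encode xs, nnth (list_encode ys) i))"
    if "i < length gs" for i
  proof -
    from ys(2,3) that obtain k' where "k' < j" "derivation_entry cs k' = (gs ! i, xs, ys ! i)" using j mem_take_iff_derivation_entry by metis
    then show ?thesis using that ys(2) by auto
  qed
  then show ?L using k ys(2) unfolding nnth_derivation_encode jprog_judgement_encode joutput_judgement_encode jinput_judgement_encode nlength_list_encode by auto
qed

lemma justified_num_mem_iff:
  assumes j: "j \<le> length cs"
  shows "(\<exists>k<j. nnth (derivation_encode cs) k = prod_encode (a, prod_encode (list_encode zs, y))) \<longleftrightarrow> (a, zs, y) \<in> set (take j cs)"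
  unfolding nnth_derivation_encode judgement_encode_eq_iff list_encode_inverse mem_take_iff_derivation_entry[OF j] ..

lemma justified_num_prim_iff:
  assumes j: "j \<le> length cs"
  shows "(\<exists>k<j. jprog (nnth (derivation_encode cs) k) = c \<and> jinput (nnth (derivation_encode cs) k) = list_encode (u # zs) \<and>
            (\<exists>k'<j. nnth (derivation_encode cs) k' = prod_encode (b, prod_encode (list_encode (u # joutput (nnth (derivation_encode cs) k) # zs), y))))
     \<longleftrightarrow> (\<exists>w. (c, u # zs, w) \<in> set (take j cs) \<and> (b, u # w # zs, y) \<in> set (take j cs))" (is "?L \<longleftrightarrow> ?R")
proof
  assume ?L
  then obtain k k' where "k < j" "fst (derivation_entry cs k) = c" "list_encode (fst (snd (derivation_entry cs k))) = list_encode (u # zs)"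
    "k' < j" "derivation_entry cs k' = (b, u # snd (snd (derivation_entry cs k)) # zs, y)"
    unfolding nnth_derivation_encode jprog_judgement_encode jinput_judgement_encode joutput_judgement_encode judgement_encode_eq_iff list_encode_inverse by blast
  then have "derivation_entry cs k = (c, u # zs, snd (snd (derivation_entry cs k)))" "k < j" "k' < j" "derivation_entry cs k' = (b, u # snd (snd (derivation_entry cs k)) # zs, y)"
    by (auto simp: list_encode_eq prod_eq_iff simp del: list_encode.simps)
  then show ?R unfolding mem_take_iff_derivation_entry[OF j] by blast
next
  assume ?R
  then obtain w k k' where "k < j" "derivation_entry cs k = (c, u # zs, w)" "k' < j" "derivation_entry cs k' = (b, u # w # zs, y)"
    unfolding mem_take_iff_derivation_entry[OF j] by blast
  then show ?L
    unfolding nnth_derivation_encode jprog_judgement_encode jinput_judgement_encode joutput_judgement_encode judgement_encode_eq_iff list_encode_inverse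
    by (intro exI[of _ k] conjI exI[of _ k']) auto
qed

lemma justified_num_mu_iff:
  assumes j: "j \<le> length cs"
  shows "(\<exists>k<j. jprog (nnth (derivation_encode cs) k) = a \<and> jinput (nnth (derivation_encode cs) k) = list_encode zs \<and> joutput (nnth (derivation_encode cs) k) \<noteq> 0)
     \<longleftrightarrow> (\<exists>k. (a, zs, Suc k) \<in> set (take j cs))" (is "?L \<longleftrightarrow> ?R")
proof
  assume ?L
  then obtain k where "k < j" "fst (derivation_entry cs k) = a" "fst (snd (derivation_entry cs k)) = zs" "snd (snd (derivation_entry cs k)) \<noteq> 0"
    unfolding nnth_derivation_encode jprog_judgement_encode jinput_judgement_encode joutput_judgement_encode list_encode_eq by blast
  then have "k < j" "derivation_entry cs k = (a, zs, Suc (snd (snd (derivation_entry cs k)) - 1))" by (auto simp: prod_eq_iff)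
  then show ?R unfolding mem_take_iff_derivation_entry[OF j] by blast
next
  assume ?R
  then obtain k m where "k < j" "derivation_entry cs k = (a, zs, Suc m)" unfolding mem_take_iff_derivation_entry[OF j] by blast
  then show ?L unfolding nnth_derivation_encode jprog_judgement_encode jinput_judgement_encode joutput_judgement_encode by auto
qed

lemma nnth_list_encode_iff:
  "(a < nlength (list_encode xs) \<and> y = nnth (list_encode xs) a) \<longleftrightarrow> (a < length xs \<and> y = xs ! a)"
  by auto

lemma justified_num_iff:
  assumes "j < length cs"
  shows "justified_num c (list_encode xs) y (derivation_encode cs) j \<longleftrightarrow> justified (take j cs) (c, xs, y)"
proof -
  have j: "j \<le> length cs" using assms by simp
  obtain gs where gs: "psnd (psnd c) = list_encode gs" by (metis list_decode_inverse)
  note d = justified_num_comp_iff[OF j] justified_num_mem_iff[OF j] justified_num_prim_iff[OF j] justified_num_mu_iff[OF j]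
  show ?thesis
  proof (cases xs)
    case Nil
    then show ?thesis
      unfolding justified_def
      by (simp only: justified_num_def gs justified_num_comp_iff[OF j] nnth_list_encode_iff, simp only: ncons_list_encode d) (simp add: gs Nil)
  next
    case (Cons x xs')
    then have h: "nhd (list_encode xs) = x" "ntl (list_encode xs) = list_encode xs'" "list_encode xs \<noteq> 0"
      by simp_all
    show ?thesis
      unfolding justified_def
      by (simp only: justified_num_def gs justified_num_comp_iff[OF j] nnth_list_encode_iff, simp only: ncons_list_encode h, simp only: justified_num_prim_iff[OF j], simp only: d)
         (simp add: gs Cons del: list_encode.simps)
  qed
qed

lemma justified_code_derivation_encode:
  "j < length cs \<Longrightarrow> justified_code (derivation_encode cs) j \<longleftrightarrow> justified (take j cs) (cs ! j)"
proof -
  assume j: "j < length cs"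
  obtain c xs y where cs: "cs ! j = (c, xs, y)" by (cases "cs ! j") auto
  have "derivation_entry cs j = (c, xs, y)" using j cs by (simp add: derivation_entry_def)
  then have "justified_code (derivation_encode cs) j \<longleftrightarrow> justified_num c (list_encode xs) y (derivation_encode cs) j"
    unfolding justified_code_def by simp
  also have "\<dots> \<longleftrightarrow> justified (take j cs) (c, xs, y)" by (rule justified_num_iff[OF j])
  finally show ?thesis using cs by simp
qed

lemma valid_derivation_code_iff:
  "valid_derivation_code (derivation_encode cs) \<longleftrightarrow> valid_derivation cs"
  unfolding valid_derivation_code_def valid_derivation_def nlength_derivation_encode using justified_code_derivation_encode by blast

definition judgement_decode :: "nat \<Rightarrow> judgement" where
  "judgement_decode E = (pfst E, list_decode (pfst (psnd E)), psnd (psnd E))"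

lemma judgement_encode_decode[simp]: "judgement_encode (judgement_decode E) = E"
  by (simp add: judgement_decode_def judgement_encode_def prod_encode_pfst_psnd)

lemma derivation_encode_surj: "\<exists>cs. C = derivation_encode cs"
proof
  show "C = derivation_encode (map judgement_decode (list_decode C))"
    unfolding derivation_encode_def by (simp add: comp_def)
qed

lemma certifies_iff:
  "certifies w c v \<longleftrightarrow> (\<exists>cs. pfst w = derivation_encode cs \<and> valid_derivation cs \<and> (c, [v], psnd w) \<in> set cs)"
proof
  assume g: "certifies w c v"
  obtain cs where cs: "pfst w = derivation_encode cs" using derivation_encode_surj by blast
  from g have "valid_derivation cs" unfolding certifies_def cs valid_derivation_code_iff by blast
  moreover from g obtain k where "k < length cs" "judgement_encode (derivation_entry cs k) = prod_encode (c, prod_encode (list_encode [v], psnd w))"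
    unfolding certifies_def cs by (auto simp: ncons_def)
  then have "k < length cs" "cs ! k = (c, [v], psnd w)" by (auto simp: derivation_entry_def)
  then have "(c, [v], psnd w) \<in> set cs" by (metis nth_mem)
  ultimately show "\<exists>cs. pfst w = derivation_encode cs \<and> valid_derivation cs \<and> (c, [v], psnd w) \<in> set cs" using cs by blast
next
  assume "\<exists>cs. pfst w = derivation_encode cs \<and> valid_derivation cs \<and> (c, [v], psnd w) \<in> set cs"
  then obtain cs where cs: "pfst w = derivation_encode cs" "valid_derivation cs" "(c, [v], psnd w) \<in> set cs" by blast
  from cs(3) obtain k where "k < length cs" "cs ! k = (c, [v], psnd w)" by (auto simp: in_set_conv_nth)
  then have "k < length cs" "judgement_encode (derivation_entry cs k) = prod_encode (c, prod_encode (ncons v 0, psnd w))"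
    by (auto simp: derivation_entry_def ncons_def)
  then show "certifies w c v" unfolding certifies_def cs(1) valid_derivation_code_iff using cs(2) by auto
qed

lemma certifies_sound: "certifies w (recf_encode f) v \<Longrightarrow> eval f [v] (psnd w)"
proof -
  assume "certifies w (recf_encode f) v"
  then obtain cs where "valid_derivation cs" "(recf_encode f, [v], psnd w) \<in> set cs"
    using certifies_iff by blast
  then show ?thesis by (rule valid_derivation_sound)
qed

lemma certifies_exists:
  "eval f [v] y \<Longrightarrow> \<exists>w. certifies w (recf_encode f) v \<and> psnd w = y"
proof -
  assume "eval f [v] y"
  from valid_derivation_complete[OF this] obtain cs where "valid_derivation cs" "(recf_encode f, [v], y) \<in> set cs" by blast
  then have "certifies (prod_encode (derivation_encode cs, y)) (recf_encode f) v" using certifies_iff by auto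
  then show ?thesis by (intro exI[of _ "prod_encode (derivation_encode cs, y)"]) simp
qed

definition cert_test :: recf where "cert_test = recf_of 3 (\<lambda>e. if \<not> certifies (e!0) (e!1) (e!2) then 1 else 0)"
definition psnd_recf :: recf where "psnd_recf = recf_of 1 (\<lambda>e. psnd (e!0))"
definition universal :: recf where "universal = Comp psnd_recf [Mn cert_test]"

lemma recursive_cert_test:
  "recursive 3 (\<lambda>e. if \<not> certifies (e!0) (e!1) (e!2) then 1 else 0)"
  using decidable_not[OF decidable_certifies] unfolding decidable_def .

lemma eval_cert_test_iff:
  "eval cert_test [w, c, v] r \<longleftrightarrow> r = (if certifies w c v then 0 else 1)"
  unfolding cert_test_def using eval_recf_of_iff[OF recursive_cert_test, of "[w, c, v]" r] by simp

lemma eval_psnd_recf_iff: "eval psnd_recf [z] r \<longleftrightarrow> r = psnd z"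
  unfolding psnd_recf_def using eval_recf_of_iff[OF recursive_psnd_base, of "[z]" r] by simp

lemma eval_Mn_cert_test_iff:
  "eval (Mn cert_test) [c, v] n \<longleftrightarrow> certifies n c v \<and> (\<forall>m<n. \<not> certifies m c v)"
proof
  assume "eval (Mn cert_test) [c, v] n"
  then have "eval cert_test (n # [c, v]) 0" "\<forall>m<n. \<exists>k. eval cert_test (m # [c, v]) (Suc k)"
    by (auto elim: evalMnE)
  then show "certifies n c v \<and> (\<forall>m<n. \<not> certifies m c v)"
    unfolding eval_cert_test_iff by (metis Suc_neq_Zero zero_neq_one)
next
  assume a: "certifies n c v \<and> (\<forall>m<n. \<not> certifies m c v)"
  show "eval (Mn cert_test) [c, v] n"
  proof (rule eval.mu)
    show "eval cert_test (n # [c, v]) 0" using a eval_cert_test_iff by simp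
    show "\<forall>m<n. \<exists>k. eval cert_test (m # [c, v]) (Suc k)" using a eval_cert_test_iff by simp
  qed
qed

lemma eval_universal_iff:
  "eval universal [c, v] y \<longleftrightarrow> (\<exists>n. certifies n c v \<and> (\<forall>m<n. \<not> certifies m c v) \<and> y = psnd n)"
proof
  assume "eval universal [c, v] y"
  then obtain zs where "list_all2 (\<lambda>g y. eval g [c, v] y) [Mn cert_test] zs" "eval psnd_recf zs y"
    unfolding universal_def by (auto elim: evalCompE)
  then obtain n where "eval (Mn cert_test) [c, v] n" "eval psnd_recf [n] y"
    by (auto simp: list_all2_Cons1)
  then show "\<exists>n. certifies n c v \<and> (\<forall>m<n. \<not> certifies m c v) \<and> y = psnd n"
    using eval_Mn_cert_test_iff eval_psnd_recf_iff by blast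
next
  assume "\<exists>n. certifies n c v \<and> (\<forall>m<n. \<not> certifies m c v) \<and> y = psnd n"
  then obtain n where n: "certifies n c v \<and> (\<forall>m<n. \<not> certifies m c v)" "y = psnd n" by blast
  show "eval universal [c, v] y" unfolding universal_def
  proof (rule eval.comp)
    show "list_all2 (\<lambda>g y. eval g [c, v] y) [Mn cert_test] [n]" using n(1) eval_Mn_cert_test_iff by simp
    show "eval psnd_recf [n] y" using n(2) eval_psnd_recf_iff by simp
  qed
qed

theorem eval_universal: "eval universal [recf_encode f, v] y \<longleftrightarrow> eval f [v] y"
proof
  assume "eval universal [recf_encode f, v] y"
  then obtain n where "certifies n (recf_encode f) v" "y = psnd n" using eval_universal_iff by blast
  then show "eval f [v] y" using certifies_sound by blast
next
  assume e: "eval f [v] y"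
  then obtain w where "certifies w (recf_encode f) v" by (meson certifies_exists)
  then have ex: "\<exists>n. certifies n (recf_encode f) v" by blast
  define n where "n = (LEAST n. certifies n (recf_encode f) v)"
  have n: "certifies n (recf_encode f) v" "\<forall>m<n. \<not> certifies m (recf_encode f) v"
    using LeastI_ex[OF ex] not_less_Least unfolding n_def by blast+
  have "eval f [v] (psnd n)" using certifies_sound[OF n(1)] .
  then have "psnd n = y" using eval_det e by blast
  then show "eval universal [recf_encode f, v] y" using eval_universal_iff n by blast
qed

section \<open>Binary strings as numbers\<close>

function n2s :: "nat \<Rightarrow> bool list" where
  "n2s n = (if n = 0 then [] else even n # n2s ((n - 1) div 2))"
  by auto
termination by (relation "measure id") auto

declare n2s.simps[simp del]

lemma s2n_n2s[simp]: "s2n (n2s n) = n"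
proof (induction n rule: less_induct)
  case (less n)
  show ?case
  proof (cases "n = 0")
    case True then show ?thesis by (simp add: n2s.simps)
  next
    case False
    then have IH: "s2n (n2s ((n - 1) div 2)) = (n - 1) div 2" using less by simp
    have e: "n2s n = even n # n2s ((n - 1) div 2)" using False by (subst n2s.simps) simp
    have "2 * ((n - 1) div 2) + (if even n then 2 else 1) = n" using False by presburger
    then show ?thesis by (simp only: e s2n.simps(2) IH)
  qed
qed

lemma n2s_s2n[simp]: "n2s (s2n x) = x"
proof (induction x)
  case Nil then show ?case by (simp add: n2s.simps)
next
  case (Cons b bs)
  have "(s2n (b # bs) - 1) div 2 = s2n bs" by (cases b) auto
  then show ?case using Cons by (subst n2s.simps) auto
qed

lemma s2n_inj[simp]: "s2n x = s2n y \<longleftrightarrow> x = y"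
  by (metis n2s_s2n)

lemma s2n_append: "s2n (xs @ ys) = s2n xs + 2 ^ length xs * s2n ys"
  by (induction xs) auto

lemma length_le_s2n: "length x \<le> s2n x"
  by (induction x) auto

definition stl :: "nat \<Rightarrow> nat" where "stl v = (v - 1) div 2"

lemma stl_s2n: "stl (s2n x) = s2n (tl x)"
  by (cases x) (auto simp: stl_def)

lemma stl_funpow_s2n: "(stl ^^ i) (s2n x) = s2n (drop i x)"
  by (induction i arbitrary: x) (auto simp: funpow_swap1 stl_s2n drop_Suc tl_drop)

lemma even_s2n_iff:
  "(even (s2n x) \<and> s2n x \<noteq> 0) \<longleftrightarrow> (x \<noteq> [] \<and> hd x)"
  by (cases x) auto

lemma recursive_half_base: "recursive 1 (\<lambda>e. e!0 div 2)"
proof (rule recursive_by_primrec[where B="\<lambda>e. 0" and S="\<lambda>e. e!0 - e!1" and C="\<lambda>e. e!0"])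
  fix e :: "nat list"
  have "primrec_val (\<lambda>e. 0) (\<lambda>e. e!0 - e!1) i e = i div 2" for i
  proof (induction i)
    case (Suc i)
    have "Suc i div 2 = i - i div 2" by (cases "even i") (auto elim!: evenE oddE)
    then show ?case using Suc by simp
  qed simp
  then show "primrec_val (\<lambda>e. 0) (\<lambda>e. e!0 - e!1) (e!0) e = e!0 div 2" .
qed (intro recursive_zero recursive_diff recursive_proj; simp)+

lemma recursive_half:
  "recursive n A \<Longrightarrow> recursive n (\<lambda>e. A e div 2)" by (rule recursive_comp1[OF recursive_half_base])

lemma recursive_stl:
  "recursive n A \<Longrightarrow> recursive n (\<lambda>e. stl (A e))" unfolding stl_def by (intro recursive_half recursive_dec)

lemma recursive_stl_funpow_base: "recursive 2 (\<lambda>e. (stl ^^ (e!0)) (e!1))"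
proof (rule recursive_by_primrec[where B="\<lambda>e. e!1" and S="\<lambda>e. stl (e!1)" and C="\<lambda>e. e!0"])
  fix e :: "nat list"
  have "primrec_val (\<lambda>e. e!1) (\<lambda>e. stl (e!1)) i e = (stl ^^ i) (e!1)" for i by (induction i) auto
  then show "primrec_val (\<lambda>e. e!1) (\<lambda>e. stl (e!1)) (e!0) e = (stl ^^ (e!0)) (e!1)" .
qed (intro recursive_stl recursive_proj; simp)+

lemma recursive_stl_funpow:
  "recursive n A \<Longrightarrow> recursive n B \<Longrightarrow> recursive n (\<lambda>e. (stl ^^ (A e)) (B e))"
  by (rule recursive_comp2[OF recursive_stl_funpow_base])

lemma recursive_power2_base: "recursive 1 (\<lambda>e. 2 ^ (e!0))"
proof (rule recursive_by_primrec[where B="\<lambda>e. 1" and S="\<lambda>e. e!1 + e!1" and C="\<lambda>e. e!0"])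
  fix e :: "nat list"
  have "primrec_val (\<lambda>e. 1) (\<lambda>e. e!1 + e!1) i e = 2 ^ i" for i by (induction i) auto
  then show "primrec_val (\<lambda>e. 1) (\<lambda>e. e!1 + e!1) (e!0) e = 2 ^ (e!0)" .
qed (intro recursive_const recursive_add recursive_proj; simp)+

lemma recursive_power2:
  "recursive n A \<Longrightarrow> recursive n (\<lambda>e. 2 ^ (A e))" by (rule recursive_comp1[OF recursive_power2_base])

lemma decidable_even: "recursive n A \<Longrightarrow> decidable n (\<lambda>e. even (A e))"
proof -
  assume a: "recursive n A"
  have "decidable n (\<lambda>e. A e = 2 * (A e div 2))" by (intro decidable_eq recursive_mult recursive_const recursive_half a)
  then show ?thesis unfolding decidable_def
  proof (rule recursive_cong)
    fix e :: "nat list"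
    have "even (A e) \<longleftrightarrow> A e = 2 * (A e div 2)"
      by (metis dvd_triv_left even_two_times_div_two)
    then show "(if A e = 2 * (A e div 2) then 1 else 0) = (if even (A e) then 1 else (0::nat))" by (simp only:)
  qed
qed

definition leading_ones :: "nat \<Rightarrow> nat" where
  "leading_ones v = card {i. i < v \<and> (\<forall>k<Suc i. even ((stl ^^ k) v) \<and> (stl ^^ k) v \<noteq> 0)}"

lemma recursive_leading_ones:
  "recursive n A \<Longrightarrow> recursive n (\<lambda>e. leading_ones (A e))"
  unfolding leading_ones_def by (intro recursive_arith_intros decidable_even recursive_stl_funpow recursive_tl; assumption?)

definition tagged :: "nat \<Rightarrow> bool list \<Rightarrow> bool list" where
  "tagged p y = replicate p True @ False # y"

lemma leading_ones_s2n_tagged: "leading_ones (s2n (tagged p y)) = p"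
proof -
  let ?v = "s2n (tagged p y)"
  let ?one = "\<lambda>k. even ((stl ^^ k) ?v) \<and> (stl ^^ k) ?v \<noteq> 0"
  have one: "?one k \<longleftrightarrow> k < p" if "k \<le> p" for k
  proof -
    have "?one k \<longleftrightarrow> (drop k (tagged p y) \<noteq> [] \<and> hd (drop k (tagged p y)))"
      unfolding stl_funpow_s2n even_s2n_iff ..
    also have "\<dots> \<longleftrightarrow> k < p"
      using that by (cases "p - k") (auto simp: tagged_def)
    finally show ?thesis .
  qed
  have "(\<forall>k<Suc i. ?one k) \<longleftrightarrow> i < p" for i
  proof
    assume all: "\<forall>k<Suc i. ?one k"
    show "i < p"
    proof (rule ccontr)
      assume "\<not> i < p"
      then have "?one p" using all by simp
      then show False using one[of p] by simp
    qed
  qed (use one in simp)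
  moreover have "p < ?v" using length_le_s2n[of "tagged p y"] by (simp add: tagged_def)
  ultimately have "{i. i < ?v \<and> (\<forall>k<Suc i. ?one k)} = {..<p}" by auto
  then show ?thesis unfolding leading_ones_def by simp
qed

lemma s2n_replicate_True: "s2n (replicate p True) + 2 = 2 ^ Suc p"
  by (induction p) auto

lemma s2n_tagged: "s2n (tagged p y) = 3 * 2 ^ p - 2 + 2 ^ Suc p * s2n y"
proof -
  have "s2n (replicate p True @ [False]) = 3 * 2 ^ p - 2"
    using s2n_replicate_True[of p] by (simp add: s2n_append)
  then show ?thesis
    using s2n_append[of "replicate p True @ [False]" y] by (simp add: tagged_def)
qed

lemma stl_funpow_s2n_tagged: "(stl ^^ Suc p) (s2n (tagged p y)) = s2n y"
  unfolding stl_funpow_s2n tagged_def by simp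

lemma length_tagged: "length (tagged p y) = Suc (p + length y)"
  by (simp add: tagged_def)

section \<open>Collisions of a sequence\<close>

definition collisions_before :: "(nat \<Rightarrow> 'a) \<Rightarrow> nat \<Rightarrow> nat" where
  "collisions_before g m = card {m'. m' < m \<and> g m' = g m}"

lemma collisions_before_attained:
  "k \<le> collisions_before g m \<Longrightarrow> \<exists>m'. g m' = g m \<and> collisions_before g m' = k"
proof (induction m rule: less_induct)
  case (less m)
  let ?C = "{m'. m' < m \<and> g m' = g m}"
  show ?case
  proof (cases "k = collisions_before g m")
    case False
    then have "?C \<noteq> {}" using less.prems unfolding collisions_before_def by (metis card.empty le_zero_eq)
    moreover have fin: "finite ?C" by simp
    ultimately have a: "Max ?C \<in> ?C" by (rule Max_in[rotated])
    define a where "a = Max ?C"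
    have "{m'. m' < a \<and> g m' = g a} = ?C - {a}"
      using a Max_ge[OF fin] unfolding a_def by fastforce
    then have "collisions_before g a = collisions_before g m - 1"
      using a fin unfolding collisions_before_def a_def by simp
    then have "k \<le> collisions_before g a" using less.prems False by simp
    then show ?thesis using less.IH a unfolding a_def by fastforce
  qed blast
qed

lemma card_fiber_le_2:
  assumes "finite A"
    and "\<And>m. collisions_before g m = 1 \<Longrightarrow> W (g m) = a"
    and "\<And>m. 2 \<le> collisions_before g m \<Longrightarrow> W (g m) = b" and "a \<noteq> b"
  shows "card {m \<in> A. g m = z} \<le> 2"
proof (rule ccontr)
  let ?S = "{m \<in> A. g m = z}"
  assume "\<not> card ?S \<le> 2"
  have fin: "finite ?S" using assms(1) by simp
  have "?S \<noteq> {}" using \<open>\<not> card ?S \<le> 2\<close> by (metis card.empty zero_le)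
  then have m: "Max ?S \<in> ?S" using fin by (rule Max_in[rotated])
  have "?S - {Max ?S} \<subseteq> {m'. m' < Max ?S \<and> g m' = g (Max ?S)}"
    using m Max_ge[OF fin] by fastforce
  then have "card (?S - {Max ?S}) \<le> collisions_before g (Max ?S)"
    unfolding collisions_before_def by (intro card_mono) auto
  then have "2 \<le> collisions_before g (Max ?S)" using m fin \<open>\<not> card ?S \<le> 2\<close> by simp
  obtain m1 where "g m1 = g (Max ?S)" "collisions_before g m1 = 1"
    using collisions_before_attained[of 1 g "Max ?S"] \<open>2 \<le> collisions_before g (Max ?S)\<close> by auto
  moreover obtain m2 where "g m2 = g (Max ?S)" "collisions_before g m2 = 2"
    using collisions_before_attained[of 2 g "Max ?S"] \<open>2 \<le> collisions_before g (Max ?S)\<close> by auto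
  ultimately have "W (g m1) = a" "W (g m2) = b" using assms(2)[of m1] assms(3)[of m2] by simp_all
  then show False using \<open>g m1 = g (Max ?S)\<close> \<open>g m2 = g (Max ?S)\<close> assms(4) by simp
qed

lemma card_le_mult_card_image:
  assumes "finite A" "\<And>z. card {x \<in> A. g x = z} \<le> k"
  shows "card A \<le> k * card (g ` A)"
proof -
  have "A = (\<Union>z\<in>g ` A. {x \<in> A. g x = z})" by auto
  then have "card A \<le> (\<Sum>z\<in>g ` A. card {x \<in> A. g x = z})"
    using card_UN_le[OF finite_imageI[OF assms(1)]] by metis
  also have "\<dots> \<le> (\<Sum>z\<in>g ` A. k)" by (intro sum_mono assms(2))
  finally show ?thesis by (simp add: mult.commute)
qed

section \<open>The diagonal machine\<close>

definition machine_of :: "recf \<Rightarrow> bool list \<Rightarrow> bool list option" where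
  "machine_of f x = (if \<exists>y. eval f [s2n x] y then Some (n2s (THE y. eval f [s2n x] y)) else None)"

lemma machine_of_eq_Some_iff: "machine_of f x = Some z \<longleftrightarrow> eval f [s2n x] (s2n z)"
proof
  assume m: "machine_of f x = Some z"
  then obtain y where y: "eval f [s2n x] y" unfolding machine_of_def by (auto split: if_splits)
  then have "(THE y. eval f [s2n x] y) = y" using eval_det by blast
  then have "machine_of f x = Some (n2s y)" using y unfolding machine_of_def by auto
  then have "z = n2s y" using m by simp
  then show "eval f [s2n x] (s2n z)" using y by simp
next
  assume e: "eval f [s2n x] (s2n z)"
  then have "(THE y. eval f [s2n x] y) = s2n z" using eval_det by blast
  then show "machine_of f x = Some z" using e unfolding machine_of_def by auto
qed

lemma machine_machine_of: "machine (machine_of f)"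
  unfolding partial_computable_def using machine_of_eq_Some_iff by blast

lemma eval_recf_of1_iff:
  "recursive 1 F \<Longrightarrow> eval (recf_of 1 F) [v] a \<longleftrightarrow> a = F [v]"
  using eval_recf_of_iff[of 1 F "[v]" a] by simp

lemma eval_recf_of_const_iff: "eval (recf_of 1 (\<lambda>_. k)) [v] a \<longleftrightarrow> a = k"
  by (rule eval_recf_of1_iff[OF recursive_const])

lemma recursive_total_computable:
  assumes "total_computable t"
  shows "recursive 1 (\<lambda>e. s2n (t (n2s (e!0))))"
proof -
  obtain f where f: "\<forall>x y. Some (t x) = Some y \<longleftrightarrow> eval f [s2n x] (s2n y)"
    using assms unfolding total_computable_def partial_computable_def by blast
  have "eval f [v] (s2n (t (n2s v)))" for v
    using f[rule_format, of "n2s v" "t (n2s v)"] by simp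
  then show ?thesis
    unfolding recursive_def by (intro exI[of _ f]) (auto simp: length_Suc_conv)
qed

lemma partial_computable_comp_total:
  assumes "partial_computable h" "total_computable t"
  shows "partial_computable (\<lambda>x. h (t x))"
proof -
  obtain fh where fh: "\<forall>x y. h x = Some y \<longleftrightarrow> eval fh [s2n x] (s2n y)"
    using assms(1) unfolding partial_computable_def by blast
  let ?T = "recf_of 1 (\<lambda>e. s2n (t (n2s (e!0))))"
  have "eval (Comp fh [?T]) [s2n x] (s2n y) \<longleftrightarrow> h (t x) = Some y" for x y
    using fh unfolding eval_Comp1_iff eval_recf_of1_iff[OF recursive_total_computable[OF assms(2)]]
    by simp
  then show ?thesis unfolding partial_computable_def by blast
qed

lemma partial_computable_map_option:
  assumes "partial_computable h" "recursive 1 (\<lambda>e. s2n (F (n2s (e!0))))"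
  shows "partial_computable (\<lambda>x. map_option F (h x))"
proof -
  obtain fh where fh: "\<forall>x y. h x = Some y \<longleftrightarrow> eval fh [s2n x] (s2n y)"
    using assms(1) unfolding partial_computable_def by blast
  let ?F = "recf_of 1 (\<lambda>e. s2n (F (n2s (e!0))))"
  have "eval (Comp ?F [fh]) [s2n x] (s2n y) \<longleftrightarrow> map_option F (h x) = Some y" for x y
  proof -
    have fh_iff: "eval fh [s2n x] a \<longleftrightarrow> h x = Some (n2s a)" for a
      using fh[rule_format, of x "n2s a"] by simp
    show ?thesis
      unfolding eval_Comp1_iff eval_recf_of1_iff[OF assms(2)] fh_iff
      by (auto intro: exI[of _ "s2n b" for b])
  qed
  then show ?thesis unfolding partial_computable_def by blast
qed

definition self_interp :: recf where
  "self_interp = Comp universal [Comp universal [recf_of 1 (\<lambda>e. leading_ones (e!0)), Proj 0], Proj 0]"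

lemma eval_self_interp_iff:
  "eval self_interp [v] r \<longleftrightarrow> (\<exists>a. eval universal [leading_ones v, v] a \<and> eval universal [a, v] r)"
proof -
  have "recursive 1 (\<lambda>e. leading_ones (e!0))" by (intro recursive_leading_ones recursive_proj) simp
  from eval_recf_of1_iff[OF this]
  have "eval (recf_of 1 (\<lambda>e. leading_ones (e!0))) [v] a \<longleftrightarrow> a = leading_ones v" for a
    by (simp only: nth_Cons_0)
  then show ?thesis unfolding self_interp_def eval_Comp2_iff eval_Proj0_iff by auto
qed

text \<open>The tag \<open>p\<close> of an input \<open>tagged p y\<close> can be chosen after the machine is fixed; this
  replaces an appeal to the recursion theorem.\<close>

lemma machine_of_self_interp_tagged:
  assumes "recursive 1 (\<lambda>e. recf_encode (P (e!0)))"
  obtains p where "\<And>y r. machine_of self_interp (tagged p y) = Some r \<longleftrightarrow>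
    eval (P (s2n (tagged p y))) [s2n (tagged p y)] (s2n r)"
proof
  let ?Q = "recf_of 1 (\<lambda>e. recf_encode (P (e!0)))"
  from eval_recf_of1_iff[OF assms]
  have Q: "eval ?Q [v] a \<longleftrightarrow> a = recf_encode (P v)" for v a
    by (simp only: nth_Cons_0)
  show "machine_of self_interp (tagged (recf_encode ?Q) y) = Some r \<longleftrightarrow>
    eval (P (s2n (tagged (recf_encode ?Q) y))) [s2n (tagged (recf_encode ?Q) y)] (s2n r)" for y r
    unfolding machine_of_eq_Some_iff eval_self_interp_iff leading_ones_s2n_tagged eval_universal Q
    by (auto simp: eval_universal)
qed

definition bit_flip :: "bool list \<Rightarrow> bool list" where
  "bit_flip b = (if b = bit0 then bit1 else bit0)"

lemma recursive_bit_flip: "recursive 1 (\<lambda>e. s2n (bit_flip (n2s (e!0))))"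
proof (rule recursive_cong)
  show "recursive 1 (\<lambda>e. if e!0 = 1 then 2 else 1)"
    by (intro recursive_if decidable_eq recursive_const recursive_proj) simp
  have "n2s v = bit0 \<longleftrightarrow> v = s2n bit0" for v by (metis n2s_s2n s2n_n2s)
  then show "(if e!0 = 1 then 2 else 1) = s2n (bit_flip (n2s (e!0)))" for e :: "nat list"
    by (simp add: bit_flip_def)
qed

lemma recursive_collisions_tagged:
  assumes "total_computable t"
  obtains rank where "recursive 1 (\<lambda>e. rank (e!0))"
    and "\<And>p m. rank (s2n (tagged p (n2s m))) = collisions_before (\<lambda>m. t (tagged p (n2s m))) m"
proof -
  define tn where "tn v = s2n (t (n2s v))" for v
  define rank where "rank v = card {m. m < (stl ^^ Suc (leading_ones v)) v \<and>
     tn (3 * 2 ^ leading_ones v - 2 + 2 ^ Suc (leading_ones v) * m) = tn v}" for v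
  have recursive_tn: "recursive n F \<Longrightarrow> recursive n (\<lambda>e. tn (F e))" for n F
    using recursive_comp1[OF recursive_total_computable[OF assms]] unfolding tn_def .
  have "recursive 1 (\<lambda>e. rank (e!0))"
    unfolding rank_def
    by (intro recursive_intros recursive_tn recursive_leading_ones recursive_stl_funpow
        recursive_power2 recursive_tl; simp?)
  moreover have "rank (s2n (tagged p (n2s m))) = collisions_before (\<lambda>m. t (tagged p (n2s m))) m"
    for p m
  proof -
    have tn_tagged: "tn (3 * 2 ^ p - 2 + 2 ^ Suc p * m') = s2n (t (tagged p (n2s m')))" for m'
    proof -
      have "3 * 2 ^ p - 2 + 2 ^ Suc p * m' = s2n (tagged p (n2s m'))"
        by (simp only: s2n_tagged s2n_n2s)
      then show ?thesis unfolding tn_def by (simp only: n2s_s2n)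
    qed
    have tn_m: "tn (s2n (tagged p (n2s m))) = s2n (t (tagged p (n2s m)))"
      by (simp only: tn_def n2s_s2n)
    show ?thesis
      unfolding rank_def collisions_before_def leading_ones_s2n_tagged stl_funpow_s2n_tagged
        s2n_n2s tn_tagged tn_m s2n_inj ..
  qed
  ultimately show thesis by (rule that)
qed

lemma diagonal_sequence:
  assumes U: "effectively_optimal U" and h: "partial_computable h"
  obtains g :: "nat \<Rightarrow> bool list" and c where
    "\<And>m. length (g m) \<le> length (n2s m) + c"
    "\<And>m r. collisions_before g m = 0 \<Longrightarrow> U (g m) = Some r \<longleftrightarrow> map_option bit_flip (h (g m)) = Some r"
    "\<And>m. collisions_before g m = 1 \<Longrightarrow> U (g m) = Some bit0"
    "\<And>m. 2 \<le> collisions_before g m \<Longrightarrow> U (g m) = Some bit1"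
proof -
  have "\<exists>t. total_computable t \<and> length_bounded t \<and> (\<forall>x. machine_of self_interp x = U (t x))"
    using U machine_machine_of unfolding effectively_optimal_def by blast
  then obtain t where t: "total_computable t" "length_bounded t"
    and tV: "\<And>x. machine_of self_interp x = U (t x)"
    by blast
  obtain cb where cb: "\<And>x. length (t x) \<le> length x + cb"
    using t(2) unfolding length_bounded_def by blast
  obtain fl where fl: "\<And>x y. map_option bit_flip (h (t x)) = Some y \<longleftrightarrow> eval fl [s2n x] (s2n y)"
    using partial_computable_map_option[OF partial_computable_comp_total[OF h t(1)] recursive_bit_flip]
    unfolding partial_computable_def by blast
  obtain rank where recursive_rank: "recursive 1 (\<lambda>e. rank (e!0))"
    and rank_g: "\<And>p m. rank (s2n (tagged p (n2s m))) = collisions_before (\<lambda>m. t (tagged p (n2s m))) m"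
    using recursive_collisions_tagged[OF t(1)] by blast
  define P where "P v = (if rank v = 0 then fl
    else if rank v = 1 then recf_of 1 (\<lambda>_. s2n bit0) else recf_of 1 (\<lambda>_. s2n bit1))" for v
  have "recursive 1 (\<lambda>e. recf_encode (P (e!0)))"
    unfolding P_def if_distrib[of recf_encode]
    by (intro recursive_if decidable_eq recursive_const recursive_rank)
  then obtain p where p: "\<And>y r. machine_of self_interp (tagged p y) = Some r \<longleftrightarrow>
    eval (P (s2n (tagged p y))) [s2n (tagged p y)] (s2n r)"
    using machine_of_self_interp_tagged by blast
  define g where "g m = t (tagged p (n2s m))" for m
  have U_g: "U (g m) = Some r \<longleftrightarrow> eval (P (s2n (tagged p (n2s m)))) [s2n (tagged p (n2s m))] (s2n r)"
    for m r
    unfolding g_def tV[symmetric] p ..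
  show thesis
  proof
    show "length (g m) \<le> length (n2s m) + (Suc p + cb)" for m
      using cb[of "tagged p (n2s m)"] by (simp add: g_def length_tagged)
    show "U (g m) = Some r \<longleftrightarrow> map_option bit_flip (h (g m)) = Some r"
      if "collisions_before g m = 0" for m r
      using U_g[of m r] fl[of "tagged p (n2s m)" r] that unfolding P_def rank_g g_def[symmetric] by simp
    show "U (g m) = Some bit0" if "collisions_before g m = 1" for m
    proof -
      have P_m: "P (s2n (tagged p (n2s m))) = recf_of 1 (\<lambda>_. s2n bit0)"
        using that unfolding P_def rank_g g_def[symmetric] by simp
      show ?thesis using U_g[of m bit0] unfolding P_m eval_recf_of_const_iff by simp
    qed
    show "U (g m) = Some bit1" if "2 \<le> collisions_before g m" for m
    proof -
      have P_m: "P (s2n (tagged p (n2s m))) = recf_of 1 (\<lambda>_. s2n bit1)"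
        using that unfolding P_def rank_g g_def[symmetric] by simp
      show ?thesis using U_g[of m bit1] unfolding P_m eval_recf_of_const_iff by simp
    qed
  qed
qed

section \<open>Counting misclassified strings\<close>

definition misclassified ::
  "(bool list \<Rightarrow> bool list option) \<Rightarrow> (bool list \<Rightarrow> bool list option) \<Rightarrow> bool list set" where
  "misclassified U h = {x. h x = None \<or> (U x = Some bit0 \<and> h x = Some bit1) \<or> (U x = Some bit1 \<and> h x = Some bit0)}"

lemma card_strings_of_length: "card {m. length (n2s m) = L} = 2 ^ L"
proof -
  have "{m. length (n2s m) = L} = s2n ` {y. length y = L}" by force
  then show ?thesis
    using card_lists_length_eq[of "UNIV :: bool set" L] by (simp add: card_image inj_on_def)
qed

lemma misclassified_growth:
  assumes U: "effectively_optimal U" and h: "partial_computable h"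
    and h01: "\<forall>x y. h x = Some y \<longrightarrow> y \<in> {bit0, bit1}"
  obtains N where "\<And>n. N \<le> n \<Longrightarrow> 2 ^ (n - N) \<le> 2 * card {x. length x \<le> n \<and> x \<in> misclassified U h}"
proof -
  obtain g c where len: "\<And>m. length (g m) \<le> length (n2s m) + c"
    and first: "\<And>m r. collisions_before g m = 0 \<Longrightarrow> U (g m) = Some r \<longleftrightarrow> map_option bit_flip (h (g m)) = Some r"
    and second: "\<And>m. collisions_before g m = 1 \<Longrightarrow> U (g m) = Some bit0"
    and third: "\<And>m. 2 \<le> collisions_before g m \<Longrightarrow> U (g m) = Some bit1"
    using diagonal_sequence[OF U h] by blast
  have "g m \<in> misclassified U h" for m
  proof -
    obtain m0 where "g m0 = g m" "collisions_before g m0 = 0"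
      using collisions_before_attained[of 0 g m] by blast
    then show ?thesis
      using first[of m0] h01 by (cases "h (g m)") (auto simp: misclassified_def bit_flip_def)
  qed
  have "2 ^ (n - c) \<le> 2 * card {x. length x \<le> n \<and> x \<in> misclassified U h}" if "c \<le> n" for n
  proof -
    let ?A = "{m. length (n2s m) = n - c}"
    have fin: "finite ?A" using card_strings_of_length[of "n - c"] card.infinite by fastforce
    have "card {m \<in> ?A. g m = z} \<le> 2" for z
      by (rule card_fiber_le_2[where W = U]) (use fin second third in auto)
    then have "card ?A \<le> 2 * card (g ` ?A)" by (rule card_le_mult_card_image[OF fin])
    then have "2 ^ (n - c) \<le> 2 * card (g ` ?A)" by (simp add: card_strings_of_length)
    also have "card (g ` ?A) \<le> card {x. length x \<le> n \<and> x \<in> misclassified U h}"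
    proof (intro card_mono finite_subset[OF _ finite_lists_length_le[of "UNIV :: bool set" n]])
      have "length (g m) \<le> n" if "m \<in> ?A" for m
        using len[of m] that \<open>c \<le> n\<close> by simp
      then show "g ` ?A \<subseteq> {x. length x \<le> n \<and> x \<in> misclassified U h}"
        using \<open>\<And>m. g m \<in> misclassified U h\<close> by blast
    qed auto
    finally show ?thesis by simp
  qed
  then show thesis by (rule that)
qed

lemma Liminf_exponential_ratio_pos:
  assumes "\<And>n. N \<le> n \<Longrightarrow> 2 ^ (n - N) \<le> 2 * c n"
  shows "Liminf sequentially (\<lambda>n. ereal (real (c n) / 2 ^ (n + 1))) > 0"
proof -
  have "1 / 2 ^ (N + 2) \<le> real (c n) / 2 ^ (n + 1)" if "N \<le> n" for n
  proof -
    have "(2::real) ^ (n - N) \<le> 2 * real (c n)"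
      using assms[OF that] by (metis of_nat_le_iff of_nat_mult of_nat_numeral of_nat_power)
    have "(2::real) ^ (n + 1) = 2 ^ (n - N) * 2 ^ (N + 1)"
      using that by (simp flip: power_add)
    also have "\<dots> \<le> 2 * real (c n) * 2 ^ (N + 1)"
      using \<open>(2::real) ^ (n - N) \<le> 2 * real (c n)\<close> by (rule mult_right_mono) simp
    finally show ?thesis by (simp add: field_simps)
  qed
  then have "eventually (\<lambda>n. ereal (1 / 2 ^ (N + 2)) \<le> ereal (real (c n) / 2 ^ (n + 1))) sequentially"
    unfolding eventually_sequentially by auto
  then have "ereal (1 / 2 ^ (N + 2)) \<le> Liminf sequentially (\<lambda>n. ereal (real (c n) / 2 ^ (n + 1)))"
    by (rule Liminf_bounded)
  then show ?thesis by (rule order.strict_trans2[rotated]) simp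
qed

theorem theorem7p1:
  fixes U :: "bool list \<Rightarrow> bool list option"
  assumes "effectively_optimal U"
  defines "A \<equiv> {x. U x = Some bit0}"
      and "B \<equiv> {x. U x = Some bit1}"
  shows "A \<inter> B = {} \<and> computably_inseparable A B \<and>
    (\<forall>h :: bool list \<Rightarrow> bool list option.
       partial_computable h \<and> (\<forall>x y. h x = Some y \<longrightarrow> y \<in> {bit0, bit1}) \<longrightarrow>
       Liminf sequentially (\<lambda>n::nat. ereal
         (real (card {x :: bool list. length x \<le> n \<and>
              (h x = None \<or> (x \<in> A \<and> h x = Some bit1) \<or> (x \<in> B \<and> h x = Some bit0))})
          / 2 ^ (n + 1))) > 0)"
proof -
  have errors: "{x. length x \<le> n \<and> (h x = None \<or> (x \<in> A \<and> h x = Some bit1) \<or> (x \<in> B \<and> h x = Some bit0))}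
      = {x. length x \<le> n \<and> x \<in> misclassified U h}" for h n
    by (simp add: A_def B_def misclassified_def)
  have "computably_inseparable A B"
    unfolding computably_inseparable_def
  proof
    assume "\<exists>s. total_computable s \<and> (\<forall>x. s x \<in> {bit0, bit1}) \<and> (\<forall>x\<in>A. s x = bit0) \<and> (\<forall>x\<in>B. s x = bit1)"
    then obtain s where s: "partial_computable (\<lambda>x. Some (s x))" "\<forall>x. s x \<in> {bit0, bit1}"
      and none: "misclassified U (\<lambda>x. Some (s x)) = {}"
      unfolding total_computable_def misclassified_def A_def B_def by auto
    obtain N where "\<And>n. N \<le> n \<Longrightarrow> 2 ^ (n - N) \<le> 2 * card {x. length x \<le> n \<and> x \<in> misclassified U (\<lambda>x. Some (s x))}"
      using misclassified_growth[OF assms(1) s(1)] s(2) by blast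
    from this[of N] show False unfolding none by simp
  qed
  moreover have "Liminf sequentially (\<lambda>n. ereal (real (card {x. length x \<le> n \<and> x \<in> misclassified U h}) / 2 ^ (n + 1))) > 0"
    if "partial_computable h" "\<forall>x y. h x = Some y \<longrightarrow> y \<in> {bit0, bit1}" for h
    by (rule misclassified_growth[OF assms(1) that]) (rule Liminf_exponential_ratio_pos)
  moreover have "A \<inter> B = {}" by (auto simp: A_def B_def)
  ultimately show ?thesis unfolding errors by blast
qed

end
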